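(* For every $\varphi\in L^2(\mathbb{T})$ with $\hat\varphi(0)=0$ and all $s,t$, we have $\langle\varphi,X_{ts}(\varphi,\varphi)\rangle=0$ and $$2\langle\varphi,X^2_{ts}(\varphi,\varphi,\varphi)\rangle+\langle X_{ts}(\varphi,\varphi),X_{ts}(\varphi,\varphi)\rangle=0,$$ where $\langle\cdot,\cdot\rangle$ is the $L^2(\mathbb{T})$ scalar product.
   Context: For a distribution $f$ on $\mathbb{T}=[-\pi,\pi]$ write $f(\xi)=\sum_k\hat f(k)e^{ik\xi}$. $\dot X_\sigma$ is the bilinear operator $\dot X_\sigma(\varphi_1,\varphi_2)=\frac12U(-\sigma)\partial_\xi[(U(\sigma)\varphi_1)(U(\sigma)\varphi_2)]$ with $\widehat{U(t)\varphi}(k)=e^{ik^3t}\hat\varphi(k)$; equivalently $\widehat{\dot X_\sigma(\varphi_1,\varphi_2)}(k)=\frac{ik}{2}\sum_{k_1\ne0,k}e^{-3ikk_1k_2\sigma}\hat\varphi_1(k_1)\hat\varphi_2(k_2)$, $k_2=k-k_1$. $X_{ts}=\int_s^t\dot X_\sigma d\sigma$ (so $\widehat{X_{ts}(\varphi_1,\varphi_2)}(k)=\sum_{k_1\ne0,k}\frac{e^{-3ikk_1k_2s}-e^{-3ikk_1k_2t}}{6k_1k_2}\hat\varphi_1(k_1)\hat\varphi_2(k_2)$) and $X^2_{ts}(\varphi_1,\varphi_2,\varphi_3)=2\int_s^td\sigma\int_s^\sigma d\sigma_1\dot X_\sigma(\varphi_1,\dot X_{\sigma_1}(\varphi_2,\varphi_3))$,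 defined on trigonometric polynomials and extended by continuity (they are bounded on mean-zero $L^2$). *)

theory Defs
  imports "HOL-Analysis.Analysis"
begin

text \<open>Elements of L2(T) are represented by their Fourier coefficient sequences
  (Plancherel), f(xi) = sum_k f_k e^(i k xi).  Real-valued mean-zero L2 functions
  correspond to square-summable sequences with c(-k) = cnj (c k) and c 0 = 0.\<close>

definition l2_seq :: "(int \<Rightarrow> complex) \<Rightarrow> bool" where
  "l2_seq c \<longleftrightarrow> (\<lambda>k. (norm (c k))\<^sup>2) summable_on UNIV"

definition real_valued_seq :: "(int \<Rightarrow> complex) \<Rightarrow> bool" where
  "real_valued_seq c \<longleftrightarrow> (\<forall>k. c (-k) = cnj (c k))"

text \<open>L2(T) scalar product, via Parseval: integral over [-pi,pi] of f * conj g.\<close>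
definition l2_inner :: "(int \<Rightarrow> complex) \<Rightarrow> (int \<Rightarrow> complex) \<Rightarrow> complex" where
  "l2_inner f g = 2 * complex_of_real pi * (\<Sum>\<^sub>\<infinity>k. f k * cnj (g k))"

definition Xdot :: "real \<Rightarrow> (int \<Rightarrow> complex) \<Rightarrow> (int \<Rightarrow> complex) \<Rightarrow> int \<Rightarrow> complex" where
  "Xdot \<sigma> a b k = (\<i> * of_int k / 2) *
     (\<Sum>\<^sub>\<infinity>k1\<in>{k1. k1 \<noteq> 0 \<and> k1 \<noteq> k}.
        exp (- 3 * \<i> * of_int (k * k1 * (k - k1)) * complex_of_real \<sigma>) * a k1 * b (k - k1))"

text \<open>Fourier coefficients of X_ts(phi1,phi2) (closed form of the integral of Xdot).\<close>
definition Xts :: "real \<Rightarrow> real \<Rightarrow> (int \<Rightarrow> complex) \<Rightarrow> (int \<Rightarrow> complex) \<Rightarrow> int \<Rightarrow> complex" where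
  "Xts t s a b k =
     (\<Sum>\<^sub>\<infinity>k1\<in>{k1. k1 \<noteq> 0 \<and> k1 \<noteq> k}.
        (exp (- 3 * \<i> * of_int (k * k1 * (k - k1)) * complex_of_real s)
         - exp (- 3 * \<i> * of_int (k * k1 * (k - k1)) * complex_of_real t))
        / of_int (6 * k1 * (k - k1)) * a k1 * b (k - k1))"

text \<open>X^2_ts on trigonometric polynomials (finitely supported coefficient sequences):
  2 int_s^t dsigma int_s^sigma dsigma1 Xdot_sigma(phi1, Xdot_sigma1(phi2,phi3)),
  with oriented integrals.\<close>
definition X2_trig :: "real \<Rightarrow> real \<Rightarrow> (int \<Rightarrow> complex) \<Rightarrow> (int \<Rightarrow> complex) \<Rightarrow> (int \<Rightarrow> complex)
    \<Rightarrow> int \<Rightarrow> complex" where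
  "X2_trig t s a b c k =
     2 * (LBINT \<sigma>=ereal s..ereal t. (LBINT \<sigma>1=ereal s..ereal \<sigma>. Xdot \<sigma> a (Xdot \<sigma>1 b c) k))"

definition trunc :: "nat \<Rightarrow> (int \<Rightarrow> complex) \<Rightarrow> int \<Rightarrow> complex" where
  "trunc N a k = (if \<bar>k\<bar> \<le> int N then a k else 0)"

text \<open>Extension by continuity of X^2_ts to L2: the L2-limit of its values on the
  Fourier truncations.\<close>
definition X2ts :: "real \<Rightarrow> real \<Rightarrow> (int \<Rightarrow> complex) \<Rightarrow> (int \<Rightarrow> complex) \<Rightarrow> (int \<Rightarrow> complex)
    \<Rightarrow> int \<Rightarrow> complex" where
  "X2ts t s a b c = (THE \<psi>. l2_seq \<psi> \<and>
     (\<lambda>N. \<Sum>\<^sub>\<infinity>k. (norm (X2_trig t s (trunc N a) (trunc N b) (trunc N c) k - \<psi> k))\<^sup>2)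
       \<longlonglongrightarrow> 0)"

end

theory Submission
  imports Defs
begin

text \<open>For a real-valued trigonometric polynomial \<open>a\<close> everything is a finite sum, and
  both claims follow by differentiating in \<open>t\<close> (they hold trivially at \<open>t = s\<close>):
  \<open>d/dt \<langle>a, X\<^sub>t\<^sub>s(a, a)\<rangle> = \<langle>a, Xdot\<^sub>t(a, a)\<rangle>\<close> and
  \<open>d/dt (2 \<langle>a, X\<^sup>2\<^sub>t\<^sub>s\<rangle> + \<langle>X\<^sub>t\<^sub>s, X\<^sub>t\<^sub>s\<rangle>) = 4 \<langle>a, Xdot\<^sub>t(a, X\<^sub>t\<^sub>s)\<rangle> + 2 Re \<langle>Xdot\<^sub>t(a, a), X\<^sub>t\<^sub>s\<rangle>\<close>.
  Both vanish because of the cancellation \<open>\<langle>a, Xdot(a, \<psi>)\<rangle> = - \<langle>Xdot(a, a), \<psi>\<rangle> / 2\<close> for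
  real-valued \<open>\<psi>\<close>: both sides are sums over frequency triples \<open>(p, q, -p-q)\<close>, weighted by
  \<open>p\<close> and by \<open>p + q\<close>, and symmetrising in \<open>p, q\<close> matches them.

  For \<open>\<phi> \<in> L\<^sup>2\<close> we apply this to the Fourier truncations of \<open>\<phi>\<close> and pass to the limit by
  dominated convergence. Each inner factor of \<open>X\<close> and \<open>X\<^sup>2\<close> carries a weight \<open>1 / \<bar>k\<bar>\<close>,
  which turns \<open>\<ell>\<^sup>2\<close> into \<open>\<ell>\<^sup>1\<close>; the outer factor \<open>k\<close> of the \<open>X\<^sup>2\<close> kernel is absorbed by the
  frequency of the phase it multiplies, except on two resonant diagonals, where the kernel
  grows like \<open>\<bar>t - s\<bar>\<close>. Young's inequality \<open>\<ell>\<^sup>2 * \<ell>\<^sup>1 \<subseteq> \<ell>\<^sup>2\<close> then gives square-summable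
  majorants for all coefficients involved.\<close>

section \<open>Infinite sums\<close>

lemma infsum_tendsto_dominated:
  fixes f :: "nat \<Rightarrow> 'a::countable \<Rightarrow> 'b::{banach,second_countable_topology}"
  assumes w: "w summable_on UNIV"
    and bound: "\<And>n x. norm (f n x) \<le> w x"
    and lim: "\<And>x. (\<lambda>n. f n x) \<longlonglongrightarrow> g x"
  shows "(\<lambda>n. infsum (f n) UNIV) \<longlonglongrightarrow> infsum g UNIV"
proof -
  have w_nonneg: "0 \<le> w x" for x
    using bound by (meson norm_ge_zero order_trans)
  have w_int: "integrable (count_space UNIV) w"
    using w w_nonneg
    by (metis abs_summable_equivalent abs_summable_on_def real_norm_def abs_of_nonneg summable_on_cong)
  have g_bound: "norm (g x) \<le> w x" for x
    using tendsto_norm[OF lim[of x]] bound[of _ x] by (intro LIMSEQ_le_const2) auto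
  have "Infinite_Set_Sum.abs_summable_on (f n) UNIV" for n
    unfolding Infinite_Set_Sum.abs_summable_on_def
    by (rule Bochner_Integration.integrable_bound[OF w_int]) (auto simp: bound w_nonneg)
  moreover have "Infinite_Set_Sum.abs_summable_on g UNIV"
    unfolding Infinite_Set_Sum.abs_summable_on_def
    by (rule Bochner_Integration.integrable_bound[OF w_int]) (auto simp: g_bound w_nonneg)
  moreover have "(\<lambda>n. infsetsum (f n) UNIV) \<longlonglongrightarrow> infsetsum g UNIV"
    unfolding infsetsum_def
    by (rule integral_dominated_convergence[where w=w]) (auto simp: w_int lim bound)
  ultimately show ?thesis
    by (simp add: infsetsum_infsum)
qed

lemma norm_infsum_le_dominating:
  fixes f :: "'a \<Rightarrow> 'b::banach"
  assumes "g summable_on A" "\<And>x. x \<in> A \<Longrightarrow> norm (f x) \<le> g x"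
  shows "f summable_on A" and "norm (infsum f A) \<le> infsum g A"
proof -
  have norm_summable: "(\<lambda>x. norm (f x)) summable_on A"
    by (rule Infinite_Sum.abs_summable_on_comparison_test'[OF assms])
  then show "f summable_on A"
    by (rule abs_summable_summable)
  have "norm (infsum f A) \<le> infsum (\<lambda>x. norm (f x)) A"
    by (rule norm_infsum_bound[OF norm_summable])
  also have "\<dots> \<le> infsum g A"
    using assms(2) by (intro infsum_mono[OF norm_summable assms(1)])
  finally show "norm (infsum f A) \<le> infsum g A" .
qed

lemma infsum_UNIV_eq_sum:
  assumes "finite F" "\<And>x. x \<notin> F \<Longrightarrow> f x = 0"
  shows "infsum f UNIV = sum f F"
  using assms by (intro infsumI has_sum_finite_neutralI) auto

lemma summable_on_finite_support:
  assumes "finite F" "\<And>x. x \<notin> F \<Longrightarrow> f x = 0"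
  shows "f summable_on A"
  by (rule finite_nonzero_values_imp_summable_on, rule finite_subset[OF _ assms(1)]) (use assms(2) in auto)

lemma has_sum_pairs_nonneg:
  fixes f :: "'a \<Rightarrow> 'b \<Rightarrow> real"
  assumes "\<And>x y. 0 \<le> f x y"
    and "\<And>x. (f x has_sum g x) UNIV"
    and "(g has_sum S) UNIV"
  shows "((\<lambda>(x, y). f x y) has_sum S) UNIV"
proof -
  have "(\<lambda>(x, y). f x y) summable_on UNIV \<times> UNIV"
    using assms by (intro summable_on_SigmaI[where g=g]) (auto simp: summable_on_def)
  then show ?thesis
    using has_sum_SigmaI[where f="\<lambda>(x, y). f x y" and g=g and A=UNIV and B="\<lambda>_. UNIV"] assms
    by simp
qed

lemma has_sum_pairs_graph:
  fixes f :: "'a \<Rightarrow> real"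
  assumes "\<And>x. 0 \<le> f x" "(f has_sum S) UNIV"
  shows "((\<lambda>(x, y). if y = h x then f x else 0) has_sum S) UNIV"
proof (rule has_sum_pairs_nonneg[where g=f])
  show "((\<lambda>y. if y = h x then f x else 0) has_sum f x) UNIV" for x
    by (rule has_sum_finite_neutralI[of "{h x}"]) auto
qed (use assms in auto)

lemma summable_on_weighted:
  fixes w b :: "'a \<Rightarrow> real"
  assumes w_nonneg: "\<And>i. 0 \<le> w i"
    and "w summable_on I" "(\<lambda>i. w i * (b i)\<^sup>2) summable_on I"
  shows "(\<lambda>i. w i * b i) summable_on I"
proof (rule norm_infsum_le_dominating(1)[OF summable_on_add[OF assms(2,3)]])
  fix i
  have "0 \<le> (\<bar>b i\<bar> - 1)\<^sup>2"
    by simp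
  then have "\<bar>b i\<bar> \<le> 1 + (b i)\<^sup>2"
    by (simp add: power2_eq_square algebra_simps abs_mult_self_eq)
  from mult_left_mono[OF this w_nonneg[of i]]
  show "norm (w i * b i) \<le> w i + w i * (b i)\<^sup>2"
    by (simp add: abs_mult w_nonneg algebra_simps)
qed

lemma infsum_weighted_Cauchy_Schwarz:
  fixes w b :: "'a \<Rightarrow> real"
  assumes w_nonneg: "\<And>i. 0 \<le> w i"
    and w: "w summable_on I" and wb2: "(\<lambda>i. w i * (b i)\<^sup>2) summable_on I"
  shows "(\<Sum>\<^sub>\<infinity>i\<in>I. w i * b i)\<^sup>2 \<le> (\<Sum>\<^sub>\<infinity>i\<in>I. w i) * (\<Sum>\<^sub>\<infinity>i\<in>I. w i * (b i)\<^sup>2)"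
proof -
  define W S B where "W = (\<Sum>\<^sub>\<infinity>i\<in>I. w i)" and "S = (\<Sum>\<^sub>\<infinity>i\<in>I. w i * b i)"
    and "B = (\<Sum>\<^sub>\<infinity>i\<in>I. w i * (b i)\<^sup>2)"
  have quadratic: "0 \<le> B + - 2 * c * S + c\<^sup>2 * W" for c
  proof (rule has_sum_nonneg)
    show "((\<lambda>i. w i * (b i)\<^sup>2 + - 2 * c * (w i * b i) + c\<^sup>2 * w i) has_sum (B + - 2 * c * S + c\<^sup>2 * W)) I"
      unfolding W_def S_def B_def
      by (intro has_sum_add has_sum_cmult_right has_sum_infsum w wb2 summable_on_weighted assms)
    have "w i * (b i)\<^sup>2 + - 2 * c * (w i * b i) + c\<^sup>2 * w i = w i * (b i - c)\<^sup>2" for i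
      by (simp add: power2_eq_square algebra_simps)
    then show "0 \<le> w i * (b i)\<^sup>2 + - 2 * c * (w i * b i) + c\<^sup>2 * w i" for i
      using w_nonneg[of i] by simp
  qed
  show "S\<^sup>2 \<le> W * B"
  proof (cases "W = 0")
    case True
    have "w i = 0" if "i \<in> I" for i
      using finite_sum_le_infsum[OF w, of "{i}"] that w_nonneg True
      by (auto simp: W_def intro: order_antisym)
    then have "S = 0" unfolding S_def by (simp add: infsum_0)
    then show ?thesis using True by simp
  next
    case False
    then have "0 < W" using w_nonneg infsum_nonneg[of I w] by (simp add: W_def order_less_le)
    then show ?thesis
      using quadratic[of "S / W"] by (simp add: power2_eq_square field_simps)
  qed
qed

lemma square_summable_add:
  fixes f g :: "'a \<Rightarrow> real"
  assumes "(\<lambda>k. (f k)\<^sup>2) summable_on A" "(\<lambda>k. (g k)\<^sup>2) summable_on A"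
  shows "(\<lambda>k. (f k + g k)\<^sup>2) summable_on A"
proof (rule summable_on_comparison_test)
  show "(\<lambda>k. 2 * (f k)\<^sup>2 + 2 * (g k)\<^sup>2) summable_on A"
    using assms by (intro summable_on_add summable_on_cmult_right)
  show "(f k + g k)\<^sup>2 \<le> 2 * (f k)\<^sup>2 + 2 * (g k)\<^sup>2" for k
    using sum_squares_bound[of "f k" "g k"] by (simp add: power2_sum)
qed simp

lemma summable_on_inverse_square_int: "(\<lambda>k::int. 1 / (real_of_int k)\<^sup>2) summable_on UNIV"
proof -
  have nat: "(\<lambda>n::nat. 1 / (real n)\<^sup>2) summable_on UNIV"
    using inverse_power_summable[of 2, where 'a=real]
    by (subst summable_on_UNIV_nonneg_real_iff) (auto simp: divide_inverse)
  have pos: "(\<lambda>k::int. 1 / (real_of_int k)\<^sup>2) summable_on range int"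
    using nat by (subst summable_on_reindex) (auto simp: o_def)
  have neg: "(\<lambda>k::int. 1 / (real_of_int k)\<^sup>2) summable_on range (\<lambda>n. - int n)"
    using nat by (subst summable_on_reindex) (auto simp: o_def inj_on_def)
  have "k \<in> range int \<union> range (\<lambda>n. - int n)" for k :: int
    by (cases "0 \<le> k") (auto intro: image_eqI[where x="nat k"] image_eqI[where x="nat (- k)"])
  then have "UNIV = range int \<union> range (\<lambda>n. - int n)"
    by blast
  then show ?thesis
    using summable_on_union[OF pos neg] by simp
qed

section \<open>Convolution of nonnegative sequences\<close>

lemma has_sum_translate:
  fixes g :: "'a::ab_group_add \<Rightarrow> 'b::topological_comm_monoid_add"
  shows "((\<lambda>k. g (k - j)) has_sum S) UNIV \<longleftrightarrow> (g has_sum S) UNIV"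
  by (rule has_sum_reindex_bij_witness[where i="\<lambda>m. m + j" and j="\<lambda>k. k - j"]) auto

lemma has_sum_reflect:
  fixes g :: "'a::ab_group_add \<Rightarrow> 'b::topological_comm_monoid_add"
  shows "((\<lambda>j. g (k - j)) has_sum S) UNIV \<longleftrightarrow> (g has_sum S) UNIV"
  by (rule has_sum_reindex_bij_witness[where i="\<lambda>m. k - m" and j="\<lambda>j. k - j"]) auto

definition conv :: "('a::ab_group_add \<Rightarrow> real) \<Rightarrow> ('a \<Rightarrow> real) \<Rightarrow> 'a \<Rightarrow> real" where
  "conv f g k = (\<Sum>\<^sub>\<infinity>j. f j * g (k - j))"

lemma conv_nonneg: "(\<And>j. 0 \<le> f j) \<Longrightarrow> (\<And>j. 0 \<le> g j) \<Longrightarrow> 0 \<le> conv f g k"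
  unfolding conv_def by (intro infsum_nonneg mult_nonneg_nonneg)

lemma conv_summable_on:
  fixes f g :: "'a::ab_group_add \<Rightarrow> real"
  assumes "\<And>j. 0 \<le> f j" "f summable_on UNIV" "\<And>j. 0 \<le> g j" "g summable_on UNIV"
  shows "conv f g summable_on UNIV"
proof -
  have "((\<lambda>(j, k). f j * g (k - j)) has_sum infsum f UNIV * infsum g UNIV) UNIV"
  proof (rule has_sum_pairs_nonneg)
    show "((\<lambda>k. f j * g (k - j)) has_sum f j * infsum g UNIV) UNIV" for j
      using assms by (intro has_sum_cmult_right) (simp add: has_sum_translate)
  qed (use assms in \<open>auto intro: has_sum_cmult_left\<close>)
  then have "(\<lambda>(k, j). f j * g (k - j)) summable_on UNIV \<times> UNIV"
    by (subst summable_on_swap) (auto simp: summable_on_def)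
  then show ?thesis
    unfolding conv_def[abs_def] by (rule summable_on_Sigma_banach[where B="\<lambda>_. UNIV", simplified])
qed

text \<open>Young's inequality \<open>\<ell>\<^sup>2 * \<ell>\<^sup>1 \<subseteq> \<ell>\<^sup>2\<close>, via Cauchy-Schwarz with the weights \<open>g (k - j)\<close>.\<close>

lemma
  fixes f g :: "'a::ab_group_add \<Rightarrow> real"
  assumes f: "\<And>j. 0 \<le> f j" "(\<lambda>j. (f j)\<^sup>2) summable_on UNIV"
    and g: "\<And>j. 0 \<le> g j" "g summable_on UNIV"
  shows conv_terms_summable_on: "(\<lambda>j. f j * g (k - j)) summable_on UNIV"
    and conv_square_summable_on: "(\<lambda>k. (conv f g k)\<^sup>2) summable_on UNIV"
proof -
  have weights: "(\<lambda>j. g (k - j)) summable_on UNIV" "(\<Sum>\<^sub>\<infinity>j. g (k - j)) = infsum g UNIV" for k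
    using has_sum_reflect[of g k "infsum g UNIV"] g by (auto simp: summable_on_def infsumI)
  have weighted: "(\<lambda>j. g (k - j) * (f j)\<^sup>2) summable_on UNIV" for k
  proof (rule summable_on_comparison_test)
    show "(\<lambda>j. infsum g UNIV * (f j)\<^sup>2) summable_on UNIV"
      using f by (intro summable_on_cmult_right)
    show "g (k - j) * (f j)\<^sup>2 \<le> infsum g UNIV * (f j)\<^sup>2" for j
      using finite_sum_le_infsum[OF g(2), of "{k - j}"] g(1) by (intro mult_right_mono) auto
  qed (use g in auto)
  show "(\<lambda>j. f j * g (k - j)) summable_on UNIV"
    using summable_on_weighted[OF g(1) weights(1) weighted] by (simp add: mult.commute)
  show "(\<lambda>k. (conv f g k)\<^sup>2) summable_on UNIV"
  proof (rule summable_on_comparison_test)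
    show "(\<lambda>k. infsum g UNIV * conv (\<lambda>j. (f j)\<^sup>2) g k) summable_on UNIV"
      using f g by (intro summable_on_cmult_right conv_summable_on) auto
    show "(conv f g k)\<^sup>2 \<le> infsum g UNIV * conv (\<lambda>j. (f j)\<^sup>2) g k" for k
      using infsum_weighted_Cauchy_Schwarz[OF g(1) weights(1) weighted, of k]
      by (simp add: conv_def weights(2) mult.commute)
  qed simp
qed

section \<open>Square-summable coefficient sequences\<close>

lemma l2_seq_dominated:
  assumes "(\<lambda>k. (G k)\<^sup>2) summable_on UNIV" "\<And>k. norm (a k) \<le> G k"
  shows "l2_seq a"
  unfolding l2_seq_def
  by (rule summable_on_comparison_test[OF assms(1)]) (use assms(2) in \<open>auto intro: power_mono\<close>)

lemma l2_seq_diff: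
  assumes "l2_seq a" "l2_seq b"
  shows "l2_seq (\<lambda>k. a k - b k)"
proof -
  have "(\<lambda>k. (norm (a k) + norm (b k))\<^sup>2) summable_on UNIV"
    using assms by (intro square_summable_add) (auto simp: l2_seq_def)
  then show ?thesis
    by (rule l2_seq_dominated) (rule norm_triangle_ineq4)
qed

lemma l2_inner_zero_left [simp]: "l2_inner (\<lambda>k. 0) y = 0"
  by (simp add: l2_inner_def)

lemma l2_inner_zero_right [simp]: "l2_inner x (\<lambda>k. 0) = 0"
  by (simp add: l2_inner_def)

lemma l2_inner_mult_right: "l2_inner x (\<lambda>k. c * y k) = cnj c * l2_inner x y"
  unfolding l2_inner_def by (simp add: infsum_cmult_right'[symmetric] mult_ac)

lemma l2_inner_tendsto_dominated:
  assumes "\<And>n k. norm (a n k) \<le> A k" "(\<lambda>k. (A k)\<^sup>2) summable_on UNIV"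
    and "\<And>n k. norm (b n k) \<le> B k" "(\<lambda>k. (B k)\<^sup>2) summable_on UNIV"
    and "\<And>k. (\<lambda>n. a n k) \<longlonglongrightarrow> a' k" "\<And>k. (\<lambda>n. b n k) \<longlonglongrightarrow> b' k"
  shows "(\<lambda>n. l2_inner (a n) (b n)) \<longlonglongrightarrow> l2_inner a' b'"
  unfolding l2_inner_def
proof (rule tendsto_mult[OF tendsto_const], rule infsum_tendsto_dominated)
  show "(\<lambda>k. (A k + B k)\<^sup>2) summable_on UNIV"
    using assms(2,4) by (rule square_summable_add)
  have A_nonneg: "0 \<le> A k" and B_nonneg: "0 \<le> B k" for k
    using assms(1,3)[of undefined k] by (meson norm_ge_zero order_trans)+
  have "norm (a n k * cnj (b n k)) \<le> A k * B k" for n k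
    unfolding norm_mult complex_mod_cnj using assms(1,3) A_nonneg by (intro mult_mono) auto
  moreover have "A k * B k \<le> (A k + B k)\<^sup>2" for k
    using mult_nonneg_nonneg[OF A_nonneg[of k] B_nonneg[of k]]
    by (simp add: power2_sum)
  ultimately show "norm (a n k * cnj (b n k)) \<le> (A k + B k)\<^sup>2" for n k
    by (meson order_trans)
  show "(\<lambda>n. a n k * cnj (b n k)) \<longlonglongrightarrow> a' k * cnj (b' k)" for k
    using assms(5,6) by (intro tendsto_mult tendsto_cnj)
qed

lemma l2_tendsto_dominated:
  fixes u :: "nat \<Rightarrow> int \<Rightarrow> complex"
  assumes "\<And>n k. norm (u n k) \<le> G k" "(\<lambda>k. (G k)\<^sup>2) summable_on UNIV"
    and "\<And>k. (\<lambda>n. u n k) \<longlonglongrightarrow> u' k"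
  shows "(\<lambda>n. \<Sum>\<^sub>\<infinity>k. (norm (u n k - u' k))\<^sup>2) \<longlonglongrightarrow> 0"
proof -
  have lim_bound: "norm (u' k) \<le> G k" for k
    using tendsto_norm[OF assms(3)[of k]] assms(1) by (intro LIMSEQ_le_const2) auto
  have "(\<lambda>n. \<Sum>\<^sub>\<infinity>k. (norm (u n k - u' k))\<^sup>2) \<longlonglongrightarrow> (\<Sum>\<^sub>\<infinity>k::int. (0::real))"
  proof (rule infsum_tendsto_dominated)
    show "(\<lambda>k. (G k + G k)\<^sup>2) summable_on UNIV"
      using assms(2) by (intro square_summable_add)
    show "norm ((norm (u n k - u' k))\<^sup>2) \<le> (G k + G k)\<^sup>2" for n k
    proof -
      have "norm (u n k - u' k) \<le> G k + G k"
        using norm_triangle_ineq4[of "u n k" "u' k"] assms(1)[of n k] lim_bound[of k] by linarith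
      from power_mono[OF this norm_ge_zero, of 2] show ?thesis
        by simp
    qed
    show "(\<lambda>n. (norm (u n k - u' k))\<^sup>2) \<longlonglongrightarrow> 0" for k
      using tendsto_power[OF tendsto_norm[OF LIM_zero[OF assms(3)[of k]]], of 2] by simp
  qed
  then show ?thesis by simp
qed

lemma l2_tendsto_imp_pointwise:
  assumes "\<And>n. l2_seq (u n)" "(\<lambda>n. \<Sum>\<^sub>\<infinity>k. (norm (u n k))\<^sup>2) \<longlonglongrightarrow> 0"
  shows "(\<lambda>n. u n k) \<longlonglongrightarrow> 0"
proof -
  have "(norm (u n k))\<^sup>2 \<le> (\<Sum>\<^sub>\<infinity>k. (norm (u n k))\<^sup>2)" for n
    using finite_sum_le_infsum[of "\<lambda>k. (norm (u n k))\<^sup>2" UNIV "{k}"] assms(1)[of n]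
    by (auto simp: l2_seq_def)
  then have "(\<lambda>n. (norm (u n k))\<^sup>2) \<longlonglongrightarrow> 0"
    by (intro tendsto_sandwich[OF _ _ tendsto_const assms(2)]) auto
  then have "(\<lambda>n. sqrt ((norm (u n k))\<^sup>2)) \<longlonglongrightarrow> 0"
    using tendsto_real_sqrt by fastforce
  then show ?thesis
    by (simp add: tendsto_norm_zero_iff)
qed

text \<open>The value of \<^const>\<open>X2ts\<close> is the pointwise limit as soon as the approximations are
  dominated by a square-summable sequence: that limit is then also the \<open>\<ell>\<^sup>2\<close>-limit, and an
  \<open>\<ell>\<^sup>2\<close>-limit is determined by its coefficients.\<close>

lemma X2ts_eqI:
  assumes bound: "\<And>N k. norm (X2_trig t s (trunc N a) (trunc N b) (trunc N c) k) \<le> G k"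
    and G: "(\<lambda>k. (G k)\<^sup>2) summable_on UNIV"
    and lim: "\<And>k. (\<lambda>N. X2_trig t s (trunc N a) (trunc N b) (trunc N c) k) \<longlonglongrightarrow> \<psi> k"
  shows "X2ts t s a b c = \<psi>"
  unfolding X2ts_def
proof (rule the_equality)
  have "norm (\<psi> k) \<le> G k" for k
    using tendsto_norm[OF lim[of k]] bound by (intro LIMSEQ_le_const2) auto
  then show "l2_seq \<psi> \<and> (\<lambda>N. \<Sum>\<^sub>\<infinity>k. (norm (X2_trig t s (trunc N a) (trunc N b) (trunc N c) k - \<psi> k))\<^sup>2)
      \<longlonglongrightarrow> 0"
    using l2_seq_dominated[OF G] l2_tendsto_dominated[OF bound G lim] by blast
  fix \<psi>' assume \<psi>': "l2_seq \<psi>' \<and> (\<lambda>N. \<Sum>\<^sub>\<infinity>k. (norm (X2_trig t s (trunc N a) (trunc N b) (trunc N c) k - \<psi>' k))\<^sup>2)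
      \<longlonglongrightarrow> 0"
  show "\<psi>' = \<psi>"
  proof
    fix k
    have "(\<lambda>N. X2_trig t s (trunc N a) (trunc N b) (trunc N c) k - \<psi>' k) \<longlonglongrightarrow> 0"
      using \<psi>' l2_seq_dominated[OF G bound]
      by (intro l2_tendsto_imp_pointwise[where u="\<lambda>N k. X2_trig t s (trunc N a) (trunc N b) (trunc N c) k - \<psi>' k"])
        (auto intro: l2_seq_diff)
    then have "(\<lambda>N. X2_trig t s (trunc N a) (trunc N b) (trunc N c) k) \<longlonglongrightarrow> \<psi>' k"
      by (simp add: LIM_zero_iff)
    then show "\<psi>' k = \<psi> k"
      using lim LIMSEQ_unique by blast
  qed
qed

section \<open>Trigonometric polynomials\<close>

definition phase :: "int \<Rightarrow> real \<Rightarrow> complex" where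
  "phase n \<sigma> = exp (- 3 * \<i> * of_int n * complex_of_real \<sigma>)"

lemma phase_0 [simp]: "phase 0 \<sigma> = 1"
  by (simp add: phase_def)

lemma phase_add: "phase (m + n) \<sigma> = phase m \<sigma> * phase n \<sigma>"
  unfolding phase_def by (simp add: exp_add[symmetric] algebra_simps)

lemma cnj_phase: "cnj (phase n \<sigma>) = phase (- n) \<sigma>"
  unfolding phase_def by (simp add: exp_cnj)

lemma norm_phase [simp]: "norm (phase n \<sigma>) = 1"
  unfolding phase_def by (simp add: norm_exp_eq_Re)

lemma continuous_on_phase [continuous_intros]: "continuous_on S (phase n)"
  unfolding phase_def by (intro continuous_intros)

lemma phase_has_vector_derivative:
  "(phase n has_vector_derivative (- 3 * \<i> * of_int n) * phase n \<sigma>) (at \<sigma> within S)"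
proof -
  have "((\<lambda>z. exp (- 3 * \<i> * of_int n * z)) has_field_derivative
      exp (- 3 * \<i> * of_int n * complex_of_real \<sigma>) * (- 3 * \<i> * of_int n)) (at (complex_of_real \<sigma>))"
    by (auto intro!: derivative_eq_intros)
  from has_vector_derivative_real_field[OF this, where s=S] show ?thesis
    unfolding phase_def[abs_def] by (simp add: mult.commute)
qed

definition phase_prim :: "int \<Rightarrow> real \<Rightarrow> complex" where
  "phase_prim n \<sigma> = (if n = 0 then complex_of_real \<sigma> else phase n \<sigma> / (- 3 * \<i> * of_int n))"

lemma phase_prim_has_vector_derivative:
  "(phase_prim n has_vector_derivative phase n \<sigma>) (at \<sigma> within S)"
proof (cases "n = 0")
  case True
  then show ?thesis
    unfolding phase_prim_def[abs_def]
    using has_vector_derivative_of_real[OF DERIV_ident[where F="at \<sigma> within S"]] by simp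
next
  case False
  have "((\<lambda>\<sigma>. phase n \<sigma> / (- 3 * \<i> * of_int n)) has_vector_derivative
      (- 3 * \<i> * of_int n) * phase n \<sigma> / (- 3 * \<i> * of_int n)) (at \<sigma> within S)"
    by (intro has_vector_derivative_divide phase_has_vector_derivative)
  with False show ?thesis
    unfolding phase_prim_def[abs_def] by simp
qed

definition supported_in :: "nat \<Rightarrow> (int \<Rightarrow> complex) \<Rightarrow> bool" where
  "supported_in N a \<longleftrightarrow> (\<forall>k. int N < \<bar>k\<bar> \<longrightarrow> a k = 0)"

lemma supported_inD: "supported_in N a \<Longrightarrow> k \<notin> {- int N..int N} \<Longrightarrow> a k = 0"
  unfolding supported_in_def by auto

lemma has_sum_supported_pairs:
  assumes "supported_in N a" "\<And>p q. a p = 0 \<or> a q = 0 \<Longrightarrow> f (p, q) = 0"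
  shows "(f has_sum (\<Sum>x\<in>{- int N..int N} \<times> {- int N..int N}. f x)) UNIV"
proof (rule has_sum_finite_neutralI)
  fix x assume "x \<in> UNIV - {- int N..int N} \<times> {- int N..int N}"
  then show "f x = 0"
    using assms supported_inD[OF assms(1)] by (cases x) auto
qed auto

lemma summable_on_supported_pairs:
  "supported_in N a \<Longrightarrow> (\<And>p q. a p = 0 \<or> a q = 0 \<Longrightarrow> f (p, q) = 0) \<Longrightarrow> f summable_on UNIV"
  using has_sum_supported_pairs summable_on_def by blast

lemma supported_in_trunc: "supported_in N (trunc N a)"
  unfolding supported_in_def trunc_def by auto

lemma supported_in_mult_shift:
  assumes "supported_in N a" "supported_in M b" "int (N + M) < \<bar>k\<bar>"
  shows "a j * b (k - j) = 0"
proof (cases "\<bar>j\<bar> \<le> int N")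
  case True
  with assms(3) have "int M < \<bar>k - j\<bar>" by auto
  with assms(2) show ?thesis unfolding supported_in_def by auto
next
  case False
  with assms(1) show ?thesis unfolding supported_in_def by auto
qed

lemma supported_in_Xdot:
  "supported_in N a \<Longrightarrow> supported_in M b \<Longrightarrow> supported_in (N + M) (Xdot \<sigma> a b)"
  unfolding supported_in_def[of "N + M"] Xdot_def
  by (auto simp: mult.assoc supported_in_mult_shift intro!: infsum_0)

lemma supported_in_Xts:
  "supported_in N a \<Longrightarrow> supported_in M b \<Longrightarrow> supported_in (N + M) (Xts t s a b)"
  unfolding supported_in_def[of "N + M"] Xts_def
  by (auto simp: mult.assoc supported_in_mult_shift intro!: infsum_0)

lemma l2_inner_eq_sum:
  assumes "supported_in N x"
  shows "l2_inner x y = 2 * complex_of_real pi * (\<Sum>k\<in>{- int N..int N}. x k * cnj (y k))"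
  unfolding l2_inner_def
  by (subst infsum_UNIV_eq_sum[of "{- int N..int N}"]) (use supported_inD[OF assms] in auto)

lemma l2_inner_has_vector_derivative:
  assumes "\<And>\<tau>. supported_in N (x \<tau>)" "supported_in N (x' \<tau>)"
    and "\<And>k. ((\<lambda>\<tau>. x \<tau> k) has_vector_derivative x' \<tau> k) (at \<tau>)"
    and "\<And>k. ((\<lambda>\<tau>. y \<tau> k) has_vector_derivative y' \<tau> k) (at \<tau>)"
  shows "((\<lambda>\<tau>. l2_inner (x \<tau>) (y \<tau>)) has_vector_derivative
    l2_inner (x' \<tau>) (y \<tau>) + l2_inner (x \<tau>) (y' \<tau>)) (at \<tau>)"
proof -
  have "((\<lambda>\<tau>. 2 * complex_of_real pi * (\<Sum>k\<in>{- int N..int N}. x \<tau> k * cnj (y \<tau> k))) has_vector_derivative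
      2 * complex_of_real pi * (\<Sum>k\<in>{- int N..int N}. x \<tau> k * cnj (y' \<tau> k) + x' \<tau> k * cnj (y \<tau> k)))
      (at \<tau>)"
    using assms(3,4)
    by (intro has_vector_derivative_mult_right has_vector_derivative_sum has_vector_derivative_mult
        has_vector_derivative_cnj)
  then show ?thesis
    unfolding l2_inner_eq_sum[OF assms(1)] l2_inner_eq_sum[OF assms(2)]
    by (simp add: sum.distrib algebra_simps)
qed

lemma Xdot_0: "Xdot \<sigma> a b 0 = 0"
  by (simp add: Xdot_def)

lemma Xts_0: "Xts t s a b 0 = 0"
  by (simp add: Xts_def)

lemma Xdot_eq_infsum:
  assumes "a 0 = 0" "b 0 = 0"
  shows "Xdot \<sigma> a b k = (\<i> * of_int k / 2) * (\<Sum>\<^sub>\<infinity>k1. phase (k * k1 * (k - k1)) \<sigma> * a k1 * b (k - k1))"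
  unfolding Xdot_def phase_def
  by (rule arg_cong[where f="\<lambda>x. _ * x"], rule infsum_cong_neutral) (use assms in auto)

lemma Xdot_eq_sum:
  assumes "supported_in N a" "a 0 = 0" "b 0 = 0"
  shows "Xdot \<sigma> a b k =
    (\<i> * of_int k / 2) * (\<Sum>k1\<in>{- int N..int N}. phase (k * k1 * (k - k1)) \<sigma> * a k1 * b (k - k1))"
  unfolding Xdot_eq_infsum[where a=a and b=b, OF assms(2,3)]
  by (subst infsum_UNIV_eq_sum[of "{- int N..int N}"]) (use supported_inD[OF assms(1)] in auto)

text \<open>For \<open>k\<^sub>1 = 0\<close> or \<open>k\<^sub>1 = k\<close> the coefficient is \<open>0 / 0 = 0\<close>, so the sum may run over all \<open>k\<^sub>1\<close>.\<close>

definition X_coeff :: "real \<Rightarrow> real \<Rightarrow> int \<Rightarrow> int \<Rightarrow> complex" where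
  "X_coeff t s k k1 =
    (phase (k * k1 * (k - k1)) s - phase (k * k1 * (k - k1)) t) / of_int (6 * k1 * (k - k1))"

lemma Xts_eq_infsum: "Xts t s a b k = (\<Sum>\<^sub>\<infinity>k1. X_coeff t s k k1 * a k1 * b (k - k1))"
  unfolding Xts_def phase_def X_coeff_def by (rule infsum_cong_neutral) auto

lemma Xts_eq_sum:
  assumes "supported_in N a"
  shows "Xts t s a b k = (\<Sum>k1\<in>{- int N..int N}. X_coeff t s k k1 * a k1 * b (k - k1))"
  unfolding Xts_eq_infsum
  by (subst infsum_UNIV_eq_sum[of "{- int N..int N}"]) (use supported_inD[OF assms] in auto)

lemma Xts_same [simp]: "Xts s s a b = (\<lambda>k. 0)"
  by (simp add: Xts_def fun_eq_iff)

lemma X_coeff_has_vector_derivative: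
  assumes "k1 \<noteq> 0" "k1 \<noteq> k"
  shows "((\<lambda>\<tau>. X_coeff \<tau> s k k1) has_vector_derivative
    (\<i> * of_int k / 2) * phase (k * k1 * (k - k1)) \<tau>) (at \<tau> within S)"
proof -
  have "((\<lambda>\<tau>. X_coeff \<tau> s k k1) has_vector_derivative
      (0 - (- 3 * \<i> * of_int (k * k1 * (k - k1))) * phase (k * k1 * (k - k1)) \<tau>) / of_int (6 * k1 * (k - k1)))
      (at \<tau> within S)"
    unfolding X_coeff_def
    by (intro has_vector_derivative_divide has_vector_derivative_diff phase_has_vector_derivative
        has_vector_derivative_const)
  then show ?thesis
    by (rule has_vector_derivative_eq_rhs) (use assms in \<open>auto simp: field_simps\<close>)
qed

lemma Xts_has_vector_derivative:
  assumes "supported_in N b" "b 0 = 0" "c 0 = 0"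
  shows "((\<lambda>\<tau>. Xts \<tau> s b c k) has_vector_derivative Xdot \<tau> b c k) (at \<tau> within S)"
proof -
  have "((\<lambda>\<tau>. X_coeff \<tau> s k k1 * b k1 * c (k - k1)) has_vector_derivative
      (\<i> * of_int k / 2) * (phase (k * k1 * (k - k1)) \<tau> * b k1 * c (k - k1))) (at \<tau> within S)" for k1
  proof (cases "k1 = 0 \<or> k1 = k")
    case True
    then show ?thesis using assms by auto
  next
    case False
    then have "((\<lambda>\<tau>. X_coeff \<tau> s k k1) has_vector_derivative
        (\<i> * of_int k / 2) * phase (k * k1 * (k - k1)) \<tau>) (at \<tau> within S)"
      by (intro X_coeff_has_vector_derivative) auto
    from has_vector_derivative_mult_left[OF this, of "b k1 * c (k - k1)"] show ?thesis
      by (simp add: mult.assoc)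
  qed
  then have "((\<lambda>\<tau>. \<Sum>k1\<in>{- int N..int N}. X_coeff \<tau> s k k1 * b k1 * c (k - k1)) has_vector_derivative
      (\<Sum>k1\<in>{- int N..int N}. (\<i> * of_int k / 2) * (phase (k * k1 * (k - k1)) \<tau> * b k1 * c (k - k1))))
      (at \<tau> within S)"
    by (intro has_vector_derivative_sum)
  then show ?thesis
    unfolding Xts_eq_sum[OF assms(1)] Xdot_eq_sum[where a=b and b=c, OF assms]
    by (simp add: sum_distrib_left)
qed

lemma continuous_on_Xdot:
  assumes "supported_in N b" "b 0 = 0" "c 0 = 0"
  shows "continuous_on S (\<lambda>\<sigma>. Xdot \<sigma> b c k)"
  unfolding Xdot_eq_sum[where a=b and b=c, OF assms] by (intro continuous_intros)

lemma integral_Xdot_Xdot: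
  assumes "supported_in N a" "a 0 = 0" "supported_in N b" "b 0 = 0" "c 0 = 0"
  shows "(LBINT \<sigma>\<^sub>1=s..\<sigma>. Xdot \<sigma> a (Xdot \<sigma>\<^sub>1 b c) k) = Xdot \<sigma> a (Xts \<sigma> s b c) k"
proof -
  have Xdot_eq: "Xdot \<sigma> a \<psi> k =
      (\<i> * of_int k / 2) * (\<Sum>k1\<in>{- int N..int N}. phase (k * k1 * (k - k1)) \<sigma> * a k1 * \<psi> (k - k1))"
    if "\<psi> 0 = 0" for \<psi>
    using Xdot_eq_sum[where b=\<psi>, OF assms(1,2) that] .
  have "(LBINT \<sigma>\<^sub>1=s..\<sigma>. Xdot \<sigma> a (Xdot \<sigma>\<^sub>1 b c) k) = Xdot \<sigma> a (Xts \<sigma> s b c) k - Xdot \<sigma> a (Xts s s b c) k"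
  proof (rule interval_integral_FTC_finite)
    show "continuous_on {min s \<sigma>..max s \<sigma>} (\<lambda>\<sigma>\<^sub>1. Xdot \<sigma> a (Xdot \<sigma>\<^sub>1 b c) k)"
      unfolding Xdot_eq[of "Xdot _ b c", OF Xdot_0]
      by (intro continuous_intros continuous_on_Xdot[where b=b and c=c, OF assms(3-5)])
    show "((\<lambda>\<sigma>\<^sub>1. Xdot \<sigma> a (Xts \<sigma>\<^sub>1 s b c) k) has_vector_derivative Xdot \<sigma> a (Xdot \<sigma>\<^sub>1 b c) k)
        (at \<sigma>\<^sub>1 within {min s \<sigma>..max s \<sigma>})" for \<sigma>\<^sub>1
      unfolding Xdot_eq[of "Xdot _ b c", OF Xdot_0] Xdot_eq[of "Xts _ s b c", OF Xts_0]
      by (intro has_vector_derivative_mult_right has_vector_derivative_sum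
          Xts_has_vector_derivative[where b=b and c=c, OF assms(3-5)])
  qed
  then show ?thesis
    by (simp add: Xdot_def)
qed

definition X2_kernel_prim :: "real \<Rightarrow> int \<Rightarrow> int \<Rightarrow> int \<Rightarrow> real \<Rightarrow> complex" where
  "X2_kernel_prim s k k1 k2 \<sigma> = (\<i> * of_int k / 2) / of_int (6 * k2 * (k - k1 - k2)) *
     (phase ((k - k1) * k2 * (k - k1 - k2)) s * phase_prim (k * k1 * (k - k1)) \<sigma>
      - phase_prim (k * k1 * (k - k1) + (k - k1) * k2 * (k - k1 - k2)) \<sigma>)"

definition X2_kernel :: "real \<Rightarrow> real \<Rightarrow> int \<Rightarrow> int \<Rightarrow> int \<Rightarrow> complex" where
  "X2_kernel t s k k1 k2 = X2_kernel_prim s k k1 k2 t - X2_kernel_prim s k k1 k2 s"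

definition X2_prim :: "nat \<Rightarrow> real \<Rightarrow> (int \<Rightarrow> complex) \<Rightarrow> (int \<Rightarrow> complex) \<Rightarrow> (int \<Rightarrow> complex)
    \<Rightarrow> int \<Rightarrow> real \<Rightarrow> complex" where
  "X2_prim N s a b c k \<sigma> = (\<Sum>k1\<in>{- int N..int N}. \<Sum>k2\<in>{- int N..int N}.
     X2_kernel_prim s k k1 k2 \<sigma> * a k1 * b k2 * c (k - k1 - k2))"

lemma X2_kernel_prim_has_vector_derivative:
  "(X2_kernel_prim s k k1 k2 has_vector_derivative
    (\<i> * of_int k / 2) * (phase (k * k1 * (k - k1)) \<sigma> * X_coeff \<sigma> s (k - k1) k2)) (at \<sigma> within S)"
proof -
  have "(X2_kernel_prim s k k1 k2 has_vector_derivative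
      (\<i> * of_int k / 2) / of_int (6 * k2 * (k - k1 - k2)) *
      (phase ((k - k1) * k2 * (k - k1 - k2)) s * phase (k * k1 * (k - k1)) \<sigma>
       - phase (k * k1 * (k - k1) + (k - k1) * k2 * (k - k1 - k2)) \<sigma>)) (at \<sigma> within S)"
    unfolding X2_kernel_prim_def[abs_def]
    by (intro has_vector_derivative_mult_right has_vector_derivative_diff
        phase_prim_has_vector_derivative)
  moreover have "C / D * (E\<^sub>s * e - e * E) = C * (e * ((E\<^sub>s - E) / D))" for C D E\<^sub>s e E :: complex
    by (simp add: algebra_simps diff_divide_distrib)
  ultimately show ?thesis
    unfolding X_coeff_def phase_add by (simp only:)
qed

lemma Xdot_Xts_eq_sum:
  assumes "supported_in N a" "a 0 = 0" "supported_in N b"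
  shows "Xdot \<sigma> a (Xts \<sigma> s b c) k = (\<i> * of_int k / 2) * (\<Sum>k1\<in>{- int N..int N}. \<Sum>k2\<in>{- int N..int N}.
      phase (k * k1 * (k - k1)) \<sigma> * X_coeff \<sigma> s (k - k1) k2 * a k1 * b k2 * c (k - k1 - k2))"
  unfolding Xdot_eq_sum[where b="Xts \<sigma> s b c", OF assms(1,2) Xts_0] Xts_eq_sum[OF assms(3)]
  by (simp add: sum_distrib_left mult_ac)

lemma X2_prim_has_vector_derivative:
  assumes "supported_in N a" "a 0 = 0" "supported_in N b"
  shows "(X2_prim N s a b c k has_vector_derivative Xdot \<sigma> a (Xts \<sigma> s b c) k) (at \<sigma> within S)"
proof -
  have "(X2_prim N s a b c k has_vector_derivative (\<Sum>k1\<in>{- int N..int N}. \<Sum>k2\<in>{- int N..int N}.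
      (\<i> * of_int k / 2) * (phase (k * k1 * (k - k1)) \<sigma> * X_coeff \<sigma> s (k - k1) k2)
      * a k1 * b k2 * c (k - k1 - k2))) (at \<sigma> within S)"
    unfolding X2_prim_def[abs_def]
    by (intro has_vector_derivative_sum has_vector_derivative_mult_left
        X2_kernel_prim_has_vector_derivative)
  then show ?thesis
    unfolding Xdot_Xts_eq_sum[OF assms] by (simp add: sum_distrib_left mult_ac)
qed

lemma X2_trig_eq_X2_prim:
  assumes "supported_in N a" "a 0 = 0" "supported_in N b" "b 0 = 0" "c 0 = 0"
  shows "X2_trig t s a b c k = 2 * (X2_prim N s a b c k t - X2_prim N s a b c k s)"
proof -
  have "X2_trig t s a b c k = 2 * (LBINT \<sigma>=s..t. Xdot \<sigma> a (Xts \<sigma> s b c) k)"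
    unfolding X2_trig_def integral_Xdot_Xdot[where a=a and b=b and c=c, OF assms] ..
  also have "(LBINT \<sigma>=s..t. Xdot \<sigma> a (Xts \<sigma> s b c) k) = X2_prim N s a b c k t - X2_prim N s a b c k s"
  proof (rule interval_integral_FTC_finite)
    show "continuous_on {min s t..max s t} (\<lambda>\<sigma>. Xdot \<sigma> a (Xts \<sigma> s b c) k)"
      unfolding Xdot_Xts_eq_sum[OF assms(1-3)] X_coeff_def divide_inverse
      by (intro continuous_intros)
    show "(X2_prim N s a b c k has_vector_derivative Xdot \<sigma> a (Xts \<sigma> s b c) k)
        (at \<sigma> within {min s t..max s t})" for \<sigma>
      by (rule X2_prim_has_vector_derivative[OF assms(1-3)])
  qed
  finally show ?thesis .
qed

lemma X2_trig_eq_sum: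
  assumes "supported_in N a" "a 0 = 0" "supported_in N b" "b 0 = 0" "c 0 = 0"
  shows "X2_trig t s a b c k = (\<Sum>k1\<in>{- int N..int N}. \<Sum>k2\<in>{- int N..int N}.
      2 * X2_kernel t s k k1 k2 * a k1 * b k2 * c (k - k1 - k2))"
  unfolding X2_trig_eq_X2_prim[where a=a and b=b and c=c, OF assms] X2_prim_def X2_kernel_def
  by (simp add: sum_subtractf[symmetric] sum_distrib_left algebra_simps)

lemma X2_trig_has_vector_derivative:
  assumes "supported_in N a" "a 0 = 0" "supported_in N b" "b 0 = 0" "c 0 = 0"
  shows "((\<lambda>\<tau>. X2_trig \<tau> s a b c k) has_vector_derivative 2 * Xdot \<tau> a (Xts \<tau> s b c) k) (at \<tau> within S)"
  unfolding X2_trig_eq_X2_prim[where a=a and b=b and c=c, OF assms]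
  using X2_prim_has_vector_derivative[OF assms(1-3)] by (auto intro!: derivative_eq_intros)

lemma X2_trig_same:
  assumes "supported_in N a" "a 0 = 0" "supported_in N b" "b 0 = 0" "c 0 = 0"
  shows "X2_trig s s a b c k = 0"
  by (simp add: X2_trig_eq_X2_prim[where a=a and b=b and c=c, OF assms])

section \<open>The identities for real-valued trigonometric polynomials\<close>

lemma real_valued_seqD: "real_valued_seq a \<Longrightarrow> cnj (a k) = a (- k)"
  unfolding real_valued_seq_def by (metis complex_cnj_cnj minus_minus)

lemma real_valued_seq_trunc: "real_valued_seq a \<Longrightarrow> real_valued_seq (trunc N a)"
  unfolding real_valued_seq_def trunc_def by auto

lemma real_valued_seq_bilinear:
  assumes "\<And>k k1. cnj (w k k1) = w (- k) (- k1)" "real_valued_seq a" "real_valued_seq b"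
  shows "real_valued_seq (\<lambda>k. \<Sum>\<^sub>\<infinity>k1. w k k1 * a k1 * b (k - k1))"
  unfolding real_valued_seq_def
proof
  fix k
  have "cnj (\<Sum>\<^sub>\<infinity>k1. w k k1 * a k1 * b (k - k1)) = (\<Sum>\<^sub>\<infinity>k1. w (- k) (- k1) * a (- k1) * b (- k - - k1))"
    by (simp add: infsum_cnj[symmetric] assms(1) real_valued_seqD[OF assms(2)] real_valued_seqD[OF assms(3)])
  also have "\<dots> = (\<Sum>\<^sub>\<infinity>k1. w (- k) k1 * a k1 * b (- k - k1))"
    by (rule infsum_reindex_bij_witness[where i=uminus and j=uminus]) auto
  finally show "(\<Sum>\<^sub>\<infinity>k1. w (- k) k1 * a k1 * b (- k - k1)) = cnj (\<Sum>\<^sub>\<infinity>k1. w k k1 * a k1 * b (k - k1))"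
    by simp
qed

lemma real_valued_seq_Xdot:
  assumes "real_valued_seq a" "real_valued_seq b" "a 0 = 0" "b 0 = 0"
  shows "real_valued_seq (Xdot \<sigma> a b)"
proof -
  have "cnj (phase (k * k1 * (k - k1)) \<sigma>) = phase (- k * - k1 * (- k - - k1)) \<sigma>" for k k1
    unfolding cnj_phase by (simp add: algebra_simps)
  from real_valued_seq_bilinear[where w="\<lambda>k k1. phase (k * k1 * (k - k1)) \<sigma>", OF this assms(1,2)]
  show ?thesis
    unfolding real_valued_seq_def Xdot_eq_infsum[where a=a and b=b, OF assms(3,4)] by simp
qed

lemma real_valued_seq_Xts:
  assumes "real_valued_seq a" "real_valued_seq b"
  shows "real_valued_seq (Xts t s a b)"
proof -
  have "cnj (X_coeff t s k k1) = X_coeff t s (- k) (- k1)" for k k1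
  proof -
    have "- (k * k1 * (k - k1)) = - k * - k1 * (- k - - k1)" "6 * k1 * (k - k1) = 6 * - k1 * (- k - - k1)"
      by (simp_all add: algebra_simps)
    then show ?thesis
      unfolding X_coeff_def by (simp only: complex_cnj_diff complex_cnj_divide cnj_phase complex_cnj_of_int)
  qed
  from real_valued_seq_bilinear[where w="X_coeff t s", OF this assms] show ?thesis
    unfolding Xts_eq_infsum[abs_def] .
qed

lemma l2_inner_commute_real_valued:
  assumes "real_valued_seq x" "real_valued_seq y"
  shows "l2_inner x y = l2_inner y x"
proof -
  have "(\<Sum>\<^sub>\<infinity>k. y k * cnj (x k)) = (\<Sum>\<^sub>\<infinity>k. y (- k) * cnj (x (- k)))"
    by (rule infsum_reindex_bij_witness[where i=uminus and j=uminus]) auto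
  also have "\<dots> = (\<Sum>\<^sub>\<infinity>k. x k * cnj (y k))"
    by (simp add: real_valued_seqD[OF assms(1), symmetric] real_valued_seqD[OF assms(2), symmetric]
        mult.commute)
  finally show ?thesis
    unfolding l2_inner_def by simp
qed

lemma infsum_pairs_symmetrize:
  fixes T :: "int \<Rightarrow> int \<Rightarrow> complex"
  assumes sym: "\<And>p q. T q p = T p q" and summable: "(\<lambda>(p, q). of_int p * T p q) summable_on UNIV"
  shows "2 * (\<Sum>\<^sub>\<infinity>(p, q). of_int p * T p q) = (\<Sum>\<^sub>\<infinity>(p, q). of_int (p + q) * T p q)"
proof -
  have swap: "(\<lambda>(p, q). of_int p * T p q) summable_on UNIV \<longleftrightarrow> (\<lambda>(p, q). of_int q * T p q) summable_on UNIV"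
    "(\<Sum>\<^sub>\<infinity>(p, q). of_int p * T p q) = (\<Sum>\<^sub>\<infinity>(p, q). of_int q * T p q)"
    by (rule summable_on_reindex_bij_witness[where i=prod.swap and j=prod.swap]
        infsum_reindex_bij_witness[where i=prod.swap and j=prod.swap]; auto simp: sym)+
  have "2 * (\<Sum>\<^sub>\<infinity>(p, q). of_int p * T p q) = (\<Sum>\<^sub>\<infinity>(p, q). of_int p * T p q) + (\<Sum>\<^sub>\<infinity>(p, q). of_int q * T p q)"
    using swap(2) by simp
  also have "\<dots> = (\<Sum>\<^sub>\<infinity>x. (\<lambda>(p, q). of_int p * T p q) x + (\<lambda>(p, q). of_int q * T p q) x)"
    using summable swap(1) by (intro infsum_add[symmetric]) simp_all
  also have "\<dots> = (\<Sum>\<^sub>\<infinity>(p, q). of_int (p + q) * T p q)"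
    by (intro infsum_cong) (auto simp: algebra_simps)
  finally show ?thesis .
qed

definition triple_product :: "real \<Rightarrow> (int \<Rightarrow> complex) \<Rightarrow> (int \<Rightarrow> complex) \<Rightarrow> int \<Rightarrow> int \<Rightarrow> complex" where
  "triple_product \<sigma> a \<psi> p q = phase (p * q * (p + q)) \<sigma> * a p * a q * \<psi> (- p - q)"

lemma triple_product_commute: "triple_product \<sigma> a \<psi> q p = triple_product \<sigma> a \<psi> p q"
proof -
  have "q * p * (q + p) = p * q * (p + q)" "- q - p = - p - q"
    by (simp_all add: algebra_simps)
  then show ?thesis
    unfolding triple_product_def by (simp only: mult_ac)
qed

lemma summable_on_triple_product:
  assumes "supported_in N a"
  shows "(\<lambda>(p, q). c p q * triple_product \<sigma> a \<psi> p q) summable_on UNIV"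
  by (rule summable_on_supported_pairs[OF assms]) (auto simp: triple_product_def)

lemma inner_Xdot_eq_triple_sum:
  assumes a: "supported_in N a" "a 0 = 0" "real_valued_seq a" and \<psi>: "\<psi> 0 = 0" "real_valued_seq \<psi>"
  shows "(\<Sum>\<^sub>\<infinity>k. a k * cnj (Xdot \<sigma> a \<psi> k)) =
    (\<Sum>\<^sub>\<infinity>(p, q). of_int p * (- \<i> / 2 * triple_product \<sigma> a \<psi> p q))"
proof -
  define g where "g = (\<lambda>(k, k1). a k * cnj (\<i> * of_int k / 2) * cnj (phase (k * k1 * (k - k1)) \<sigma> * a k1 * \<psi> (k - k1)))"
  have "g summable_on UNIV"
    by (rule summable_on_supported_pairs[OF a(1)]) (auto simp: g_def)
  have "(\<Sum>\<^sub>\<infinity>k. a k * cnj (Xdot \<sigma> a \<psi> k)) = (\<Sum>\<^sub>\<infinity>k. \<Sum>\<^sub>\<infinity>k1. g (k, k1))"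
    unfolding Xdot_eq_infsum[where a=a and b=\<psi>, OF a(2) \<psi>(1)] g_def prod.case
    by (simp only: infsum_cnj[symmetric] complex_cnj_mult mult.assoc infsum_cmult_right')
  also have "\<dots> = (\<Sum>\<^sub>\<infinity>x. g x)"
    using infsum_Sigma_banach[of g UNIV "\<lambda>_. UNIV"] \<open>g summable_on UNIV\<close> by simp
  also have "\<dots> = (\<Sum>\<^sub>\<infinity>(p, q). of_int p * (- \<i> / 2 * triple_product \<sigma> a \<psi> p q))"
  proof (rule infsum_reindex_bij_witness[where i="\<lambda>(p, q). (p, - q)" and j="\<lambda>(p, q). (p, - q)"])
    fix x :: "int \<times> int"
    obtain p q where x: "x = (p, - q)" by (cases x) (metis minus_minus)
    have "\<psi> (- q - p) = \<psi> (- p - q)"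
      by (rule arg_cong[where f=\<psi>]) simp
    then show "(case (case x of (p, q) \<Rightarrow> (p, - q)) of (p, q) \<Rightarrow> of_int p * (- \<i> / 2 * triple_product \<sigma> a \<psi> p q))
        = g x"
      unfolding x g_def triple_product_def
      by (simp add: real_valued_seqD[OF a(3)] real_valued_seqD[OF \<psi>(2)] cnj_phase mult_ac)
  qed auto
  finally show ?thesis .
qed

lemma Xdot_inner_eq_triple_sum:
  assumes a: "supported_in N a" "a 0 = 0" and \<psi>: "real_valued_seq \<psi>"
  shows "(\<Sum>\<^sub>\<infinity>k. Xdot \<sigma> a a k * cnj (\<psi> k)) =
    (\<Sum>\<^sub>\<infinity>(p, q). of_int (p + q) * (\<i> / 2 * triple_product \<sigma> a \<psi> p q))"
proof -
  define h where "h = (\<lambda>(k, k1). \<i> * of_int k / 2 * \<psi> (- k) * (phase (k * k1 * (k - k1)) \<sigma> * a k1 * a (k - k1)))"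
  have "h summable_on UNIV"
  proof (rule summable_on_finite_support[of "{- int (2 * N)..int (2 * N)} \<times> {- int N..int N}"])
    fix x assume x: "x \<notin> {- int (2 * N)..int (2 * N)} \<times> {- int N..int N}"
    obtain k k1 where k: "x = (k, k1)" by (cases x)
    show "h x = 0"
    proof (cases "int (N + N) < \<bar>k\<bar>")
      case True
      then show ?thesis using supported_in_mult_shift[OF a(1) a(1) True, of k1] by (simp add: h_def k)
    next
      case False
      with x k have "a k1 = 0" by (intro supported_inD[OF a(1)]) auto
      then show ?thesis by (simp add: h_def k)
    qed
  qed simp
  have "(\<Sum>\<^sub>\<infinity>k. Xdot \<sigma> a a k * cnj (\<psi> k)) = (\<Sum>\<^sub>\<infinity>k. \<Sum>\<^sub>\<infinity>k1. h (k, k1))"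
    unfolding Xdot_eq_infsum[where a=a and b=a, OF a(2) a(2)] h_def
    by (simp add: real_valued_seqD[OF \<psi>] infsum_cmult_right'[symmetric] mult_ac)
  also have "\<dots> = (\<Sum>\<^sub>\<infinity>x. h x)"
    using infsum_Sigma_banach[of h UNIV "\<lambda>_. UNIV"] \<open>h summable_on UNIV\<close> by simp
  also have "\<dots> = (\<Sum>\<^sub>\<infinity>(p, q). of_int (p + q) * (\<i> / 2 * triple_product \<sigma> a \<psi> p q))"
  proof (rule infsum_reindex_bij_witness[where j="\<lambda>(k, k1). (k1, k - k1)" and i="\<lambda>(p, q). (p + q, p)"])
    fix x :: "int \<times> int"
    obtain k k1 where x: "x = (k, k1)" by (cases x)
    have "k1 * (k - k1) * (k1 + (k - k1)) = k * k1 * (k - k1)" "\<psi> (- k1 - (k - k1)) = \<psi> (- k)"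
      by (simp_all add: algebra_simps)
    then show "(case (case x of (k, k1) \<Rightarrow> (k1, k - k1)) of
        (p, q) \<Rightarrow> of_int (p + q) * (\<i> / 2 * triple_product \<sigma> a \<psi> p q)) = h x"
      unfolding x h_def triple_product_def by (simp add: mult_ac)
  qed auto
  finally show ?thesis .
qed

lemma l2_inner_Xdot_symmetry:
  assumes "supported_in N a" "a 0 = 0" "real_valued_seq a" "\<psi> 0 = 0" "real_valued_seq \<psi>"
  shows "l2_inner a (Xdot \<sigma> a \<psi>) = - (1 / 2) * l2_inner (Xdot \<sigma> a a) \<psi>"
proof -
  define T where "T = triple_product \<sigma> a \<psi>"
  have "(\<lambda>(p, q). of_int p * (- \<i> / 2 * T p q)) summable_on UNIV"
    using summable_on_triple_product[OF assms(1), of "\<lambda>p q. of_int p * (- \<i> / 2)"]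
    by (simp add: T_def mult.assoc)
  then have "2 * (\<Sum>\<^sub>\<infinity>(p, q). of_int p * (- \<i> / 2 * T p q)) = (\<Sum>\<^sub>\<infinity>(p, q). of_int (p + q) * (- \<i> / 2 * T p q))"
    by (intro infsum_pairs_symmetrize) (simp_all add: T_def triple_product_commute)
  also have "\<dots> = - (\<Sum>\<^sub>\<infinity>(p, q). of_int (p + q) * (\<i> / 2 * T p q))"
    by (subst infsum_uminus[symmetric]) (auto intro!: infsum_cong simp: split_beta)
  finally show ?thesis
    unfolding l2_inner_def T_def inner_Xdot_eq_triple_sum[OF assms] Xdot_inner_eq_triple_sum[OF assms(1,2,5)]
    by (simp add: field_simps)
qed

lemma has_vector_derivative_zero_imp_eq:
  assumes "\<And>\<tau>. (f has_vector_derivative 0) (at \<tau>)"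
  shows "f t = f s"
proof -
  obtain c where "\<And>x. x \<in> UNIV \<Longrightarrow> f x = c"
    by (rule has_vector_derivative_zero_constant[of UNIV f]) (use assms in auto)
  then show ?thesis by simp
qed

lemma l2_inner_Xdot_self:
  assumes "supported_in N a" "a 0 = 0" "real_valued_seq a"
  shows "l2_inner a (Xdot \<sigma> a a) = 0"
proof -
  have "2 * l2_inner a (Xdot \<sigma> a a) = - l2_inner (Xdot \<sigma> a a) a"
    using l2_inner_Xdot_symmetry[OF assms assms(2,3)] by simp
  also have "l2_inner (Xdot \<sigma> a a) a = l2_inner a (Xdot \<sigma> a a)"
    using assms by (intro l2_inner_commute_real_valued real_valued_seq_Xdot)
  finally show ?thesis
    by (simp add: eq_neg_iff_add_eq_0)
qed

lemma l2_inner_Xts_self: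
  assumes a: "supported_in N a" "a 0 = 0" "real_valued_seq a"
  shows "l2_inner a (Xts t s a a) = 0"
proof -
  have "((\<lambda>\<tau>. l2_inner a (Xts \<tau> s a a)) has_vector_derivative 0) (at \<tau>)" for \<tau>
  proof -
    have "((\<lambda>\<tau>. l2_inner a (Xts \<tau> s a a)) has_vector_derivative
        l2_inner (\<lambda>k. 0) (Xts \<tau> s a a) + l2_inner a (Xdot \<tau> a a)) (at \<tau>)"
      using a by (intro l2_inner_has_vector_derivative Xts_has_vector_derivative)
        (auto simp: supported_in_def)
    then show ?thesis
      by (simp add: l2_inner_Xdot_self[OF a])
  qed
  then have "l2_inner a (Xts t s a a) = l2_inner a (Xts s s a a)"
    by (rule has_vector_derivative_zero_imp_eq)
  then show ?thesis by simp
qed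

lemma X2_trig_Xts_identity_has_vector_derivative:
  assumes a: "supported_in N a" "a 0 = 0" "real_valued_seq a"
  shows "((\<lambda>\<tau>. 2 * l2_inner a (X2_trig \<tau> s a a a) + l2_inner (Xts \<tau> s a a) (Xts \<tau> s a a))
    has_vector_derivative 0) (at \<tau>)"
proof -
  define \<psi> where "\<psi> = Xts \<tau> s a a"
  have \<psi>: "\<psi> 0 = 0" "real_valued_seq \<psi>"
    using a by (simp_all add: \<psi>_def Xts_0 real_valued_seq_Xts)
  have "((\<lambda>\<tau>. l2_inner a (X2_trig \<tau> s a a a)) has_vector_derivative
      l2_inner (\<lambda>k. 0) (X2_trig \<tau> s a a a) + l2_inner a (\<lambda>k. 2 * Xdot \<tau> a \<psi> k)) (at \<tau>)"
    unfolding \<psi>_def using a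
    by (intro l2_inner_has_vector_derivative X2_trig_has_vector_derivative) (auto simp: supported_in_def)
  moreover have "((\<lambda>\<tau>. l2_inner (Xts \<tau> s a a) (Xts \<tau> s a a)) has_vector_derivative
      l2_inner (Xdot \<tau> a a) \<psi> + l2_inner \<psi> (Xdot \<tau> a a)) (at \<tau>)"
    unfolding \<psi>_def using a
    by (intro l2_inner_has_vector_derivative[where N="N + N"] supported_in_Xts supported_in_Xdot
        Xts_has_vector_derivative)
  ultimately have "((\<lambda>\<tau>. 2 * l2_inner a (X2_trig \<tau> s a a a) + l2_inner (Xts \<tau> s a a) (Xts \<tau> s a a))
      has_vector_derivative
      2 * (l2_inner (\<lambda>k. 0) (X2_trig \<tau> s a a a) + l2_inner a (\<lambda>k. 2 * Xdot \<tau> a \<psi> k))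
      + (l2_inner (Xdot \<tau> a a) \<psi> + l2_inner \<psi> (Xdot \<tau> a a))) (at \<tau>)"
    by (intro has_vector_derivative_add has_vector_derivative_mult_right)
  moreover have "l2_inner \<psi> (Xdot \<tau> a a) = l2_inner (Xdot \<tau> a a) \<psi>"
    using a \<psi> by (intro l2_inner_commute_real_valued real_valued_seq_Xdot)
  ultimately show ?thesis
    by (simp add: l2_inner_mult_right l2_inner_Xdot_symmetry[OF a \<psi>])
qed

lemma X2_trig_Xts_identity:
  assumes a: "supported_in N a" "a 0 = 0" "real_valued_seq a"
  shows "2 * l2_inner a (X2_trig t s a a a) + l2_inner (Xts t s a a) (Xts t s a a) = 0"
proof -
  have "2 * l2_inner a (X2_trig t s a a a) + l2_inner (Xts t s a a) (Xts t s a a)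
      = 2 * l2_inner a (X2_trig s s a a a) + l2_inner (Xts s s a a) (Xts s s a a)"
    using X2_trig_Xts_identity_has_vector_derivative[OF a] by (rule has_vector_derivative_zero_imp_eq)
  moreover have "X2_trig s s a a a = (\<lambda>k. 0)"
    using X2_trig_same[where a=a and b=a and c=a, OF a(1,2,1,2,2)] by (simp add: fun_eq_iff)
  ultimately show ?thesis
    by simp
qed

section \<open>Bounds on the kernels\<close>

lemma norm_phase_prim_diff_0: "norm (phase_prim 0 t - phase_prim 0 s) = \<bar>t - s\<bar>"
  by (simp add: phase_prim_def flip: of_real_diff)

lemma norm_phase_prim_diff_le:
  assumes "n \<noteq> 0"
  shows "norm (phase_prim n t - phase_prim n s) \<le> 2 / (3 * \<bar>real_of_int n\<bar>)"
proof -
  have "phase_prim n t - phase_prim n s = (phase n t - phase n s) / (- 3 * \<i> * of_int n)"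
    using assms by (simp add: phase_prim_def diff_divide_distrib)
  then have "norm (phase_prim n t - phase_prim n s) = norm (phase n t - phase n s) / (3 * \<bar>real_of_int n\<bar>)"
    by (simp add: norm_divide norm_mult)
  also have "\<dots> \<le> 2 / (3 * \<bar>real_of_int n\<bar>)"
    using norm_triangle_ineq4[of "phase n t" "phase n s"] by (intro divide_right_mono) auto
  finally show ?thesis .
qed

lemma abs_le_abs_triple_prod:
  fixes x y z :: int
  assumes "y \<noteq> 0" "z \<noteq> 0"
  shows "\<bar>x\<bar> \<le> \<bar>x * y * z\<bar>"
proof -
  have "y * z \<noteq> 0"
    using assms by simp
  then have "1 \<le> \<bar>y * z\<bar>"
    by linarith
  then show ?thesis
    using mult_left_mono[of 1 "\<bar>y * z\<bar>" "\<bar>x\<bar>"] by (simp add: abs_mult mult.assoc)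
qed

lemma abs_times_norm_phase_prim_diff_le:
  assumes "n \<noteq> 0" "0 < c" "c * \<bar>real_of_int k\<bar> \<le> \<bar>real_of_int n\<bar>"
  shows "\<bar>real_of_int k\<bar> * norm (phase_prim n t - phase_prim n s) \<le> 2 / (3 * c)"
proof -
  have "\<bar>real_of_int k\<bar> * norm (phase_prim n t - phase_prim n s) \<le> \<bar>real_of_int k\<bar> * (2 / (3 * \<bar>real_of_int n\<bar>))"
    using norm_phase_prim_diff_le[OF assms(1)] by (intro mult_left_mono) auto
  also have "\<dots> \<le> 2 / (3 * c)"
    using assms by (simp add: field_simps)
  finally show ?thesis .
qed

lemma two_abs_le_three_abs_resonance:
  fixes k k1 k2 :: int
  assumes "(k - k1) * (k1 + k2) * (k - k2) \<noteq> 0"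
  shows "2 * \<bar>k\<bar> \<le> 3 * \<bar>(k - k1) * (k1 + k2) * (k - k2)\<bar>"
proof -
  have "\<bar>k - k1\<bar> \<le> \<bar>(k - k1) * (k1 + k2) * (k - k2)\<bar>" "\<bar>k1 + k2\<bar> \<le> \<bar>(k1 + k2) * (k - k1) * (k - k2)\<bar>"
    "\<bar>k - k2\<bar> \<le> \<bar>(k - k2) * (k - k1) * (k1 + k2)\<bar>"
    using assms by (intro abs_le_abs_triple_prod; simp)+
  then show ?thesis
    by (simp add: mult_ac)
qed

lemma resonant_weight_le:
  fixes k k1 k2 :: int
  assumes "k - k1 \<noteq> 0" "k2 \<noteq> 0" "k - k1 - k2 \<noteq> 0" "(k - k1) * (k1 + k2) * (k - k2) = 0"
  shows "\<bar>real_of_int k\<bar> / (\<bar>real_of_int k2\<bar> * \<bar>real_of_int (k - k1 - k2)\<bar>)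
    \<le> (if k1 + k2 = 0 then 1 / \<bar>real_of_int k2\<bar> else 0) + (if k2 = k then 1 / \<bar>real_of_int (k - k1 - k2)\<bar> else 0)"
proof -
  consider "k1 + k2 = 0" | "k2 = k"
    using assms(1,4) by auto
  then show ?thesis
  proof cases
    case 1
    then have "k - k1 - k2 = k" by simp
    with 1 assms(3) show ?thesis by (auto simp: divide_right_mono)
  next
    case 2
    then have "\<bar>real_of_int k\<bar> / (\<bar>real_of_int k2\<bar> * \<bar>real_of_int (k - k1 - k2)\<bar>) = 1 / \<bar>real_of_int (k - k1 - k2)\<bar>"
      using assms(2) by simp
    with 2 show ?thesis by auto
  qed
qed

lemma X2_kernel_eq:
  "X2_kernel t s k k1 k2 = (\<i> * of_int k / 2) / of_int (6 * k2 * (k - k1 - k2)) *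
    (phase ((k - k1) * k2 * (k - k1 - k2)) s * (phase_prim (k * k1 * (k - k1)) t - phase_prim (k * k1 * (k - k1)) s)
     - (phase_prim ((k - k1) * (k1 + k2) * (k - k2)) t - phase_prim ((k - k1) * (k1 + k2) * (k - k2)) s))"
proof -
  have "k * k1 * (k - k1) + (k - k1) * k2 * (k - k1 - k2) = (k - k1) * (k1 + k2) * (k - k2)"
    by (simp add: algebra_simps)
  then show ?thesis
    unfolding X2_kernel_def X2_kernel_prim_def by (simp add: algebra_simps)
qed

lemma abs_times_norm_phase_prim_diff_outer_le:
  fixes k k1 :: int
  defines "A \<equiv> k * k1 * (k - k1)"
  assumes "k \<noteq> 0" "k1 \<noteq> 0" "k - k1 \<noteq> 0"
  shows "\<bar>real_of_int k\<bar> * norm (phase_prim A t - phase_prim A s) \<le> 2 / 3"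
proof -
  have "A \<noteq> 0" "\<bar>k\<bar> \<le> \<bar>A\<bar>"
    using assms by (auto intro: abs_le_abs_triple_prod)
  then have "A \<noteq> 0" "1 * \<bar>real_of_int k\<bar> \<le> \<bar>real_of_int A\<bar>"
    by (simp_all flip: of_int_abs)
  from abs_times_norm_phase_prim_diff_le[OF this(1) _ this(2)] show ?thesis
    by simp
qed

lemma abs_times_norm_phase_prim_diff_combined_le:
  fixes k k1 k2 :: int
  defines "A \<equiv> (k - k1) * (k1 + k2) * (k - k2)"
  assumes "A \<noteq> 0"
  shows "\<bar>real_of_int k\<bar> * norm (phase_prim A t - phase_prim A s) \<le> 1"
proof -
  have "2 * \<bar>k\<bar> \<le> 3 * \<bar>A\<bar>"
    using two_abs_le_three_abs_resonance[of k k1 k2] assms by simp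
  then have "2 / 3 * \<bar>real_of_int k\<bar> \<le> \<bar>real_of_int A\<bar>"
    by (simp flip: of_int_abs)
  from abs_times_norm_phase_prim_diff_le[OF assms(2) _ this] show ?thesis
    by simp
qed

lemma norm_X2_kernel_le:
  assumes "k1 \<noteq> 0" "k2 \<noteq> 0" "k - k1 - k2 \<noteq> 0"
  shows "norm (X2_kernel t s k k1 k2) \<le> 1 / (\<bar>real_of_int k2\<bar> * \<bar>real_of_int (k - k1 - k2)\<bar>)
    + \<bar>t - s\<bar> * ((if k1 + k2 = 0 then 1 / \<bar>real_of_int k2\<bar> else 0)
                 + (if k2 = k then 1 / \<bar>real_of_int (k - k1 - k2)\<bar> else 0))"
    (is "_ \<le> 1 / ?P + \<bar>t - s\<bar> * ?R")
proof (cases "k = 0 \<or> k - k1 = 0")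
  case True
  then show ?thesis
    by (auto simp: X2_kernel_eq)
next
  case False
  define A1 A2 where "A1 = k * k1 * (k - k1)" and "A2 = (k - k1) * (k1 + k2) * (k - k2)"
  define D1 D2 where "D1 = phase_prim A1 t - phase_prim A1 s" and "D2 = phase_prim A2 t - phase_prim A2 s"
  define X where "X = (if A2 = 0 then \<bar>t - s\<bar> * \<bar>real_of_int k\<bar> else 0)"
  have P: "0 < ?P"
    using assms by simp
  have "norm (X2_kernel t s k k1 k2)
      = \<bar>real_of_int k\<bar> / (12 * ?P) * norm (phase ((k - k1) * k2 * (k - k1 - k2)) s * D1 - D2)"
    unfolding X2_kernel_eq D1_def D2_def A1_def A2_def
    by (simp add: norm_mult norm_divide abs_mult del: of_int_diff)
  also have "\<dots> \<le> \<bar>real_of_int k\<bar> / (12 * ?P) * (norm D1 + norm D2)"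
    using norm_triangle_ineq4[of "phase _ s * D1" D2] by (intro mult_left_mono) (auto simp: norm_mult)
  also have "\<dots> = (\<bar>real_of_int k\<bar> * norm D1 + \<bar>real_of_int k\<bar> * norm D2) / (12 * ?P)"
    by (simp add: field_simps)
  also have "\<dots> \<le> (2 / 3 + (1 + X)) / (12 * ?P)"
    using abs_times_norm_phase_prim_diff_outer_le[of k k1 t s]
      abs_times_norm_phase_prim_diff_combined_le[of k k1 k2 t s] False assms P
    by (intro divide_right_mono add_mono)
      (auto simp: X_def D1_def D2_def A1_def A2_def norm_phase_prim_diff_0 mult.commute)
  also have "\<dots> \<le> 1 / ?P + X / ?P"
    using P by (auto simp: X_def field_simps)
  also have "X / ?P \<le> \<bar>t - s\<bar> * ?R"
  proof (cases "A2 = 0")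
    case True
    then have "\<bar>real_of_int k\<bar> / ?P \<le> ?R"
      using resonant_weight_le[of k k1 k2] False assms by (simp add: A2_def)
    then have "\<bar>t - s\<bar> * (\<bar>real_of_int k\<bar> / ?P) \<le> \<bar>t - s\<bar> * ?R"
      by (rule mult_left_mono) simp
    with True show ?thesis by (simp add: X_def)
  qed (simp add: X_def)
  finally show ?thesis
    by simp
qed

definition damped :: "(int \<Rightarrow> complex) \<Rightarrow> int \<Rightarrow> real" where
  "damped a k = norm (a k) / \<bar>real_of_int k\<bar>"

lemma damped_nonneg: "0 \<le> damped a k"
  by (simp add: damped_def)

lemma damped_le_norm: "damped a k \<le> norm (a k)"
  by (cases "k = 0") (auto simp: damped_def divide_le_eq mult_le_cancel_left1)

lemma damped_mono: "(\<And>k. norm (a k) \<le> norm (b k)) \<Longrightarrow> damped a k \<le> damped b k"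
  unfolding damped_def by (intro divide_right_mono) auto

lemma damped_square_summable: "l2_seq a \<Longrightarrow> (\<lambda>k. (damped a k)\<^sup>2) summable_on UNIV"
  unfolding l2_seq_def
  by (erule summable_on_comparison_test) (auto intro: power_mono damped_le_norm damped_nonneg)

lemma damped_summable:
  assumes "l2_seq a"
  shows "damped a summable_on UNIV"
proof (rule summable_on_comparison_test)
  show "(\<lambda>k. 1 / 2 * ((norm (a k))\<^sup>2 + 1 / (real_of_int k)\<^sup>2)) summable_on UNIV"
    using assms unfolding l2_seq_def
    by (intro summable_on_cmult_right summable_on_add summable_on_inverse_square_int)
  show "damped a k \<le> 1 / 2 * ((norm (a k))\<^sup>2 + 1 / (real_of_int k)\<^sup>2)" for k
    using sum_squares_bound[of "norm (a k)" "1 / \<bar>real_of_int k\<bar>"]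
    by (simp add: damped_def power_divide field_simps)
qed (rule damped_nonneg)

lemma norm_X_coeff_le: "norm (X_coeff t s k k1) \<le> 1 / (3 * (\<bar>real_of_int k1\<bar> * \<bar>real_of_int (k - k1)\<bar>))"
proof -
  have "norm (X_coeff t s k k1) = norm (phase (k * k1 * (k - k1)) s - phase (k * k1 * (k - k1)) t)
      / (6 * (\<bar>real_of_int k1\<bar> * \<bar>real_of_int (k - k1)\<bar>))"
    unfolding X_coeff_def by (simp only: norm_divide norm_of_int) (simp add: abs_mult)
  also have "\<dots> \<le> 2 / (6 * (\<bar>real_of_int k1\<bar> * \<bar>real_of_int (k - k1)\<bar>))"
    using norm_triangle_ineq4[of "phase _ s" "phase _ t"] by (intro divide_right_mono) auto
  finally show ?thesis by simp
qed

lemma norm_X_term_le: "norm (X_coeff t s k k1 * a k1 * b (k - k1)) \<le> damped a k1 * damped b (k - k1)"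
proof -
  have "norm (X_coeff t s k k1 * a k1 * b (k - k1))
      \<le> 1 / (3 * (\<bar>real_of_int k1\<bar> * \<bar>real_of_int (k - k1)\<bar>)) * (norm (a k1) * norm (b (k - k1)))"
    unfolding norm_mult mult.assoc by (intro mult_right_mono norm_X_coeff_le) auto
  also have "\<dots> \<le> 1 / (\<bar>real_of_int k1\<bar> * \<bar>real_of_int (k - k1)\<bar>) * (norm (a k1) * norm (b (k - k1)))"
  proof (rule mult_right_mono)
    have "1 / (3 * P) \<le> 1 / P" if "0 \<le> P" for P :: real
      using that by (cases "P = 0") (simp_all add: field_simps)
    then show "1 / (3 * (\<bar>real_of_int k1\<bar> * \<bar>real_of_int (k - k1)\<bar>))
        \<le> 1 / (\<bar>real_of_int k1\<bar> * \<bar>real_of_int (k - k1)\<bar>)"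
      by simp
  qed simp
  also have "\<dots> = damped a k1 * damped b (k - k1)"
    by (simp add: damped_def)
  finally show ?thesis .
qed

section \<open>Passing to the limit along Fourier truncations\<close>

lemma norm_trunc_le: "norm (trunc N a k) \<le> norm (a k)"
  unfolding trunc_def by auto

lemma trunc_0: "a 0 = 0 \<Longrightarrow> trunc N a 0 = 0"
  unfolding trunc_def by auto

lemma trunc_tendsto: "(\<lambda>N. trunc N a k) \<longlonglongrightarrow> a k"
  unfolding trunc_def
  by (rule tendsto_eventually) (auto simp: eventually_sequentially intro: exI[of _ "nat \<bar>k\<bar>"])

lemma conv_damped_square_summable:
  assumes "l2_seq a" "l2_seq b"
  shows "(\<lambda>k. (conv (damped a) (damped b) k)\<^sup>2) summable_on UNIV"
  using assms by (intro conv_square_summable_on damped_nonneg damped_square_summable damped_summable)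

lemma norm_Xts_le:
  assumes "l2_seq \<phi>" "l2_seq \<psi>" "\<And>k. norm (a k) \<le> norm (\<phi> k)" "\<And>k. norm (b k) \<le> norm (\<psi> k)"
  shows "norm (Xts t s a b k) \<le> conv (damped \<phi>) (damped \<psi>) k"
  unfolding Xts_eq_infsum conv_def
proof (rule norm_infsum_le_dominating(2))
  show "(\<lambda>k1. damped \<phi> k1 * damped \<psi> (k - k1)) summable_on UNIV"
    using assms(1,2) by (intro conv_terms_summable_on damped_nonneg damped_square_summable damped_summable)
  show "norm (X_coeff t s k k1 * a k1 * b (k - k1)) \<le> damped \<phi> k1 * damped \<psi> (k - k1)" for k1
    using norm_X_term_le[of t s k k1 a b] damped_mono[of a \<phi> k1] damped_mono[of b \<psi> "k - k1"] assms(3,4)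
    by (smt (verit) damped_nonneg mult_mono)
qed

lemma Xts_trunc_tendsto:
  assumes "l2_seq a" "l2_seq b"
  shows "(\<lambda>N. Xts t s (trunc N a) (trunc N b) k) \<longlonglongrightarrow> Xts t s a b k"
  unfolding Xts_eq_infsum
proof (rule infsum_tendsto_dominated)
  show "(\<lambda>k1. damped a k1 * damped b (k - k1)) summable_on UNIV"
    using assms by (intro conv_terms_summable_on damped_nonneg damped_square_summable damped_summable)
  show "norm (X_coeff t s k k1 * trunc N a k1 * trunc N b (k - k1)) \<le> damped a k1 * damped b (k - k1)" for N k1
    using norm_X_term_le[of t s k k1 "trunc N a" "trunc N b"] norm_trunc_le
      damped_mono[of "trunc N a" a k1] damped_mono[of "trunc N b" b "k - k1"]
    by (smt (verit) damped_nonneg mult_mono)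
  show "(\<lambda>N. X_coeff t s k k1 * trunc N a k1 * trunc N b (k - k1)) \<longlonglongrightarrow> X_coeff t s k k1 * a k1 * b (k - k1)" for k1
    by (intro tendsto_mult tendsto_const trunc_tendsto)
qed

definition X2_term :: "real \<Rightarrow> real \<Rightarrow> (int \<Rightarrow> complex) \<Rightarrow> int \<Rightarrow> int \<times> int \<Rightarrow> complex" where
  "X2_term t s a k = (\<lambda>(k1, k2). 2 * X2_kernel t s k k1 k2 * a k1 * a k2 * a (k - k1 - k2))"

text \<open>The diagonals \<open>k\<^sub>2 = -k\<^sub>1\<close> and \<open>k\<^sub>2 = k\<close> are where the combined phase in
  \<^const>\<open>X2_kernel\<close> vanishes, so that the kernel grows like \<open>\<bar>t - s\<bar>\<close> there.\<close>

definition X2_majorant_term :: "real \<Rightarrow> real \<Rightarrow> (int \<Rightarrow> complex) \<Rightarrow> int \<Rightarrow> int \<times> int \<Rightarrow> real" where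
  "X2_majorant_term t s \<phi> k = (\<lambda>(k1, k2). 2 * (norm (\<phi> k1) * (damped \<phi> k2 * damped \<phi> (k - k1 - k2))
     + \<bar>t - s\<bar> * ((if k2 = - k1 then norm (\<phi> k) * (norm (\<phi> k1) * damped \<phi> (0 - k1)) else 0)
                  + (if k2 = k then norm (\<phi> k) * (norm (\<phi> k1) * damped \<phi> (0 - k1)) else 0))))"

definition X2_majorant :: "real \<Rightarrow> real \<Rightarrow> (int \<Rightarrow> complex) \<Rightarrow> int \<Rightarrow> real" where
  "X2_majorant t s \<phi> k = 2 * (conv (\<lambda>j. norm (\<phi> j)) (conv (damped \<phi>) (damped \<phi>)) k
     + \<bar>t - s\<bar> * (2 * (norm (\<phi> k) * conv (\<lambda>j. norm (\<phi> j)) (damped \<phi>) 0)))"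

lemma X2_majorant_term_has_sum:
  assumes "l2_seq \<phi>"
  shows "(X2_majorant_term t s \<phi> k has_sum X2_majorant t s \<phi> k) UNIV"
proof -
  note young = conv_terms_summable_on[OF _ _ damped_nonneg] conv_summable_on[OF damped_nonneg _ damped_nonneg]
  have main: "((\<lambda>(k1, k2). norm (\<phi> k1) * (damped \<phi> k2 * damped \<phi> (k - k1 - k2)))
      has_sum conv (\<lambda>j. norm (\<phi> j)) (conv (damped \<phi>) (damped \<phi>)) k) UNIV"
  proof (rule has_sum_pairs_nonneg)
    show "((\<lambda>k2. norm (\<phi> k1) * (damped \<phi> k2 * damped \<phi> (k - k1 - k2)))
        has_sum norm (\<phi> k1) * conv (damped \<phi>) (damped \<phi>) (k - k1)) UNIV" for k1
      unfolding conv_def using assms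
      by (intro has_sum_cmult_right has_sum_infsum young damped_nonneg damped_square_summable damped_summable)
    show "((\<lambda>k1. norm (\<phi> k1) * conv (damped \<phi>) (damped \<phi>) (k - k1))
        has_sum conv (\<lambda>j. norm (\<phi> j)) (conv (damped \<phi>) (damped \<phi>)) k) UNIV"
      unfolding conv_def[of "\<lambda>j. norm (\<phi> j)"] using assms
      by (intro has_sum_infsum conv_terms_summable_on conv_nonneg conv_summable_on damped_nonneg
          damped_summable) (simp_all add: l2_seq_def)
  qed (simp add: damped_nonneg)
  have diagonal: "((\<lambda>k1. norm (\<phi> k) * (norm (\<phi> k1) * damped \<phi> (0 - k1)))
      has_sum norm (\<phi> k) * conv (\<lambda>j. norm (\<phi> j)) (damped \<phi>) 0) UNIV"
    unfolding conv_def using assms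
    by (intro has_sum_cmult_right has_sum_infsum young damped_summable)
      (simp_all add: l2_seq_def)
  have "((\<lambda>x. 2 * ((\<lambda>(k1, k2). norm (\<phi> k1) * (damped \<phi> k2 * damped \<phi> (k - k1 - k2))) x
      + \<bar>t - s\<bar> * ((\<lambda>(k1, k2). if k2 = - k1 then norm (\<phi> k) * (norm (\<phi> k1) * damped \<phi> (0 - k1)) else 0) x
                   + (\<lambda>(k1, k2). if k2 = k then norm (\<phi> k) * (norm (\<phi> k1) * damped \<phi> (0 - k1)) else 0) x)))
      has_sum X2_majorant t s \<phi> k) UNIV"
    unfolding X2_majorant_def mult_2[of "_ * _"]
    by (intro has_sum_cmult_right has_sum_add main has_sum_pairs_graph[OF _ diagonal])
      (simp_all add: damped_nonneg)
  then show ?thesis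
    unfolding X2_majorant_term_def by (simp add: case_prod_unfold)
qed

lemma X2_majorant_square_summable:
  assumes "l2_seq \<phi>"
  shows "(\<lambda>k. (X2_majorant t s \<phi> k)\<^sup>2) summable_on UNIV"
proof -
  define c where "c = 4 * \<bar>t - s\<bar> * conv (\<lambda>j. norm (\<phi> j)) (damped \<phi>) 0"
  have "(\<lambda>k. (2 * conv (\<lambda>j. norm (\<phi> j)) (conv (damped \<phi>) (damped \<phi>)) k + c * norm (\<phi> k))\<^sup>2) summable_on UNIV"
  proof (intro square_summable_add)
    show "(\<lambda>k. (2 * conv (\<lambda>j. norm (\<phi> j)) (conv (damped \<phi>) (damped \<phi>)) k)\<^sup>2) summable_on UNIV"
      unfolding power_mult_distrib using assms
      by (intro summable_on_cmult_right conv_square_summable_on conv_nonneg conv_summable_on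
          damped_nonneg damped_summable) (simp_all add: l2_seq_def)
    show "(\<lambda>k. (c * norm (\<phi> k))\<^sup>2) summable_on UNIV"
      unfolding power_mult_distrib using assms
      by (intro summable_on_cmult_right) (simp add: l2_seq_def)
  qed
  then show ?thesis
    by (simp add: X2_majorant_def c_def algebra_simps)
qed

lemma norm_X2_term_le:
  assumes "\<And>j. norm (a j) \<le> norm (\<phi> j)" "a 0 = 0"
  shows "norm (X2_term t s a k x) \<le> X2_majorant_term t s \<phi> k x"
proof -
  obtain k1 k2 where x: "x = (k1, k2)" by (cases x)
  define k3 where "k3 = k - k1 - k2"
  have majorant_nonneg: "0 \<le> X2_majorant_term t s \<phi> k x"
    by (simp add: X2_majorant_term_def x damped_nonneg)
  show ?thesis
  proof (cases "k1 = 0 \<or> k2 = 0 \<or> k3 = 0")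
    case True
    with assms(2) majorant_nonneg show ?thesis
      by (auto simp: X2_term_def x k3_def)
  next
    case False
    define B where "B = 1 / (\<bar>real_of_int k2\<bar> * \<bar>real_of_int k3\<bar>) + \<bar>t - s\<bar> *
      ((if k1 + k2 = 0 then 1 / \<bar>real_of_int k2\<bar> else 0) + (if k2 = k then 1 / \<bar>real_of_int k3\<bar> else 0))"
    have "norm (X2_term t s a k x) = 2 * norm (X2_kernel t s k k1 k2) * (norm (a k1) * norm (a k2) * norm (a k3))"
      by (simp add: X2_term_def x k3_def norm_mult)
    also have "\<dots> \<le> 2 * B * (norm (\<phi> k1) * norm (\<phi> k2) * norm (\<phi> k3))"
      using False norm_X2_kernel_le[of k1 k2 k t s] assms(1)
      by (intro mult_mono mult_left_mono) (auto simp: B_def k3_def)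
    also have "\<dots> = X2_majorant_term t s \<phi> k x"
      using False by (auto simp: B_def X2_majorant_term_def x damped_def k3_def field_simps)
    finally show ?thesis .
  qed
qed

lemma X2_trig_trunc_eq_infsum:
  assumes "a 0 = 0"
  shows "X2_trig t s (trunc N a) (trunc N a) (trunc N a) k = infsum (X2_term t s (trunc N a) k) UNIV"
proof -
  note trunc = supported_in_trunc[of N a] trunc_0[of a N, OF assms]
  have "X2_trig t s (trunc N a) (trunc N a) (trunc N a) k
      = (\<Sum>x\<in>{- int N..int N} \<times> {- int N..int N}. X2_term t s (trunc N a) k x)"
    unfolding X2_trig_eq_sum[where a="trunc N a" and b="trunc N a" and c="trunc N a",
        OF trunc trunc trunc(2)]
    by (simp add: sum.cartesian_product X2_term_def)
  also have "\<dots> = infsum (X2_term t s (trunc N a) k) UNIV"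
    by (rule infsumI[symmetric], rule has_sum_supported_pairs[OF trunc(1)]) (auto simp: X2_term_def)
  finally show ?thesis .
qed

lemma norm_X2_trig_trunc_le:
  assumes "l2_seq \<phi>" "\<phi> 0 = 0"
  shows "norm (X2_trig t s (trunc N \<phi>) (trunc N \<phi>) (trunc N \<phi>) k) \<le> X2_majorant t s \<phi> k"
proof -
  note majorant = X2_majorant_term_has_sum[OF assms(1)]
  have "norm (infsum (X2_term t s (trunc N \<phi>) k) UNIV) \<le> infsum (X2_majorant_term t s \<phi> k) UNIV"
    using majorant norm_X2_term_le[where a="trunc N \<phi>", OF norm_trunc_le trunc_0[where a=\<phi>, OF assms(2)]]
    by (intro norm_infsum_le_dominating(2)) (auto simp: summable_on_def)
  then show ?thesis
    unfolding X2_trig_trunc_eq_infsum[where a=\<phi>, OF assms(2)] infsumI[OF majorant] .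
qed

lemma X2_trig_trunc_tendsto:
  assumes "l2_seq \<phi>" "\<phi> 0 = 0"
  shows "(\<lambda>N. X2_trig t s (trunc N \<phi>) (trunc N \<phi>) (trunc N \<phi>) k) \<longlonglongrightarrow> infsum (X2_term t s \<phi> k) UNIV"
  unfolding X2_trig_trunc_eq_infsum[where a=\<phi>, OF assms(2)]
proof (rule infsum_tendsto_dominated)
  show "X2_majorant_term t s \<phi> k summable_on UNIV"
    using X2_majorant_term_has_sum[OF assms(1)] by (auto simp: summable_on_def)
  show "norm (X2_term t s (trunc N \<phi>) k x) \<le> X2_majorant_term t s \<phi> k x" for N x
    by (rule norm_X2_term_le[where a="trunc N \<phi>", OF norm_trunc_le trunc_0[where a=\<phi>, OF assms(2)]])
  show "(\<lambda>N. X2_term t s (trunc N \<phi>) k x) \<longlonglongrightarrow> X2_term t s \<phi> k x" for x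
    unfolding X2_term_def by (cases x) (simp, intro tendsto_intros trunc_tendsto)
qed

lemma X2ts_eq_infsum_X2_term:
  assumes "l2_seq \<phi>" "\<phi> 0 = 0"
  shows "X2ts t s \<phi> \<phi> \<phi> = (\<lambda>k. infsum (X2_term t s \<phi> k) UNIV)"
  using norm_X2_trig_trunc_le[OF assms] X2_majorant_square_summable[OF assms(1)]
    X2_trig_trunc_tendsto[OF assms]
  by (rule X2ts_eqI)

theorem lemma3:
  fixes \<phi> :: "int \<Rightarrow> complex" and s t :: real
  assumes "l2_seq \<phi>" and "real_valued_seq \<phi>" and "\<phi> 0 = 0"
  shows "l2_inner \<phi> (Xts t s \<phi> \<phi>) = 0 \<and>
    2 * l2_inner \<phi> (X2ts t s \<phi> \<phi> \<phi>) + l2_inner (Xts t s \<phi> \<phi>) (Xts t s \<phi> \<phi>) = 0"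
proof -
  define \<phi>\<^sub>N where "\<phi>\<^sub>N N = trunc N \<phi>" for N
  have trig: "supported_in N (\<phi>\<^sub>N N)" "\<phi>\<^sub>N N 0 = 0" "real_valued_seq (\<phi>\<^sub>N N)" for N
    using assms by (simp_all add: \<phi>\<^sub>N_def supported_in_trunc trunc_0 real_valued_seq_trunc)
  note \<phi> = norm_trunc_le[of N \<phi> k for N k, folded \<phi>\<^sub>N_def] trunc_tendsto[of \<phi>, folded \<phi>\<^sub>N_def]
  note X = norm_Xts_le[OF assms(1,1) \<phi>(1) \<phi>(1)] Xts_trunc_tendsto[OF assms(1,1), folded \<phi>\<^sub>N_def]
  note X2 = norm_X2_trig_trunc_le[OF assms(1,3), folded \<phi>\<^sub>N_def]
    X2_trig_trunc_tendsto[OF assms(1,3), folded \<phi>\<^sub>N_def]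
  note square_summable = assms(1)[unfolded l2_seq_def]
    conv_damped_square_summable[OF assms(1,1)] X2_majorant_square_summable[OF assms(1)]
  have "(\<lambda>N. l2_inner (\<phi>\<^sub>N N) (Xts t s (\<phi>\<^sub>N N) (\<phi>\<^sub>N N))) \<longlonglongrightarrow> l2_inner \<phi> (Xts t s \<phi> \<phi>)"
    using \<phi>(1) square_summable(1) X(1) square_summable(2) \<phi>(2) X(2) by (rule l2_inner_tendsto_dominated)
  moreover have "(\<lambda>N. 2 * l2_inner (\<phi>\<^sub>N N) (X2_trig t s (\<phi>\<^sub>N N) (\<phi>\<^sub>N N) (\<phi>\<^sub>N N))
      + l2_inner (Xts t s (\<phi>\<^sub>N N) (\<phi>\<^sub>N N)) (Xts t s (\<phi>\<^sub>N N) (\<phi>\<^sub>N N)))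
      \<longlonglongrightarrow> 2 * l2_inner \<phi> (X2ts t s \<phi> \<phi> \<phi>) + l2_inner (Xts t s \<phi> \<phi>) (Xts t s \<phi> \<phi>)"
    unfolding X2ts_eq_infsum_X2_term[OF assms(1,3)]
    by (intro tendsto_add tendsto_mult tendsto_const l2_inner_tendsto_dominated[OF \<phi>(1) _ X2(1)]
        l2_inner_tendsto_dominated[OF X(1) _ X(1)] \<phi>(2) X(2) X2(2) square_summable)
  ultimately show ?thesis
    using l2_inner_Xts_self[OF trig] X2_trig_Xts_identity[OF trig] by (simp add: LIMSEQ_const_iff)
qed

end
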